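(* Let $f$ be a strategy-proof SCF and $G$ a gradual mechanism implementing $f$. Then $G$ is incentive compatible if and only if $G$ is reaction-proof.
   Context: Setting. $N$ finite set of agents, $X$ finite set of outcomes, finite type spaces $\Theta_i$, each type $\theta_i$ inducing a complete transitive preference $R(\theta_i)$ on $X$; $\Theta=\prod_i\Theta_i$. An SCF $f:\Theta\to X$ is strategy-proof if $f(\theta_i,\theta_{-i})\,R(\theta_i)\,f(\theta_i',\theta_{-i})$ for all $i,\theta_i,\theta_i',\theta_{-i}$. Dynamic game forms. A dynamic game form with perfect recall consists of a finite tree $\bar H$ of histories (finite sequences of action profiles) containing the empty initial history $\varnothing$, closed under prefixes ($\preceq$ prefix order, $\prec$ strict); terminal histories $Z$, non-terminal $H$; at each $h\in H$ a nonempty set $\mathbb P(h)$ of agents move simultaneously with available actions $A_i(h)$, all action profiles leading to successors; $\mathbb P(\varnothing)=N$; each agent's decision nodes $H_i$ are partitioned into information sets $\boldsymbol H_i$, with available actions constant on information sets and perfect recall; $\mathcal X:Z\to X$. For information sets of $i$, $\boldsymbol h_i\prec\bar{\boldsymbol h}_i$ if $h\prec\bar h$ for some $h\in\boldsymbol h_i,\bar h\in\bar{\boldsymbol h}_i$; $\bar{\boldsymbol h}_i$ is an immediate successor of $\boldsymbol h_i$ if $\boldsymbol h_i\prec\bar{\boldsymbol h}_i$ and no information set of $i$ lies strictly between them. Strategies choose an available action at each information set; $s_M$ denotes a profile for agents in $M$ ($s_{-i}$, $s_{-i,j}$ for agents other than $i$, other than $i,j$); a complete profile $s$ determines $z(s)$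 and $\mathcal X(s)=\mathcal X(z(s))$. Gradual mechanisms. A GM implementing $f$ is such a game form in which (1) actions of $i$ are nonempty subsets of $\Theta_i$; (2) at every $h\in H_i$ the available actions of $i$ are pairwise disjoint with union $\Theta_i(h)$, where for any history $h$, $\Theta_i(h)$ is the last action of $i$ in $h$ ($\Theta_i$ if $i$ has not acted); (3) $\mathcal X(z)=f(\theta)$ for all $z\in Z$, $\theta\in\Theta(z)=\prod_i\Theta_i(z)$. For a history $h$, $\Theta(h)=\prod_i\Theta_i(h)$; for an information set, $\Theta_i(\boldsymbol h_i)=\Theta_i(h)$ for $h\in\boldsymbol h_i$. Consistency. A history $h$ is consistent with $s_M$ ($M\subsetneq N$) if $h\preceq z(s_M,s_{N\setminus M})$ for some $s_{N\setminus M}$; a type profile $\theta$ is consistent with $s_M$ if the unique $z\in Z$ with $\theta\in\Theta(z)$ is. Incentive compatibility. $s_i$ is unconditional for $\theta_i$ if $\theta_i\in s_i(h)$ for every $h\in H_i$ with $\theta_i\in\Theta_i(h)$ (denoted $s_{\theta_i}$). The GM is incentive compatible if $\mathcal X(s_{\theta_i},s_{-i})\,R(\theta_i)\,\mathcal X(s_i,s_{-i})$ for all $i,\theta_i$, unconditional $s_{\theta_i}$, $s_i$, $s_{-i}$. Reaction-proofness. A GM $G$ implementing $f$ is reaction-proof if for any two distinct agents $i,j\in N$, any pair of distinct information sets $\boldsymbol h_i^1,\boldsymbol h_i^2$ of $i$ that are immediate successors of a common information set $\boldsymbol h_i$ of $i$ with $\Theta_i(\boldsymbol h_i^1)=\Theta_i(\boldsymbol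 h_i^2)$, and any histories $h^1\in\boldsymbol h_i^1$, $h^2\in\boldsymbol h_i^2$ that are both consistent with a common strategy profile $s_{-i,j}$, we have $f(\theta^1)\,R(\theta_j^1)\,f(\theta^2)$ for all $\theta^1\in\Theta(h^1)$ and $\theta^2\in\Theta(h^2)$ that are consistent with $s_{-i,j}$. *)

theory Defs
  imports Main "HOL-Library.Sublist" "HOL-Library.Disjoint_Sets"
begin

text \<open>Agents have type 'i, types (of all agents) live in a common type 't,
 outcomes have type 'x.
 Preferences: R th a b means a R(th) b (a weakly preferred to b by type th).\<close>

definition setting :: "'i set \<Rightarrow> 'x set \<Rightarrow> ('i \<Rightarrow> 't set) \<Rightarrow> ('t \<Rightarrow> 'x \<Rightarrow> 'x \<Rightarrow> bool) \<Rightarrow> bool" where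
  "setting N X Theta R \<longleftrightarrow> finite N \<and> finite X \<and> (\<forall>i\<in>N. finite (Theta i)) \<and>
     (\<forall>i\<in>N. \<forall>th\<in>Theta i.
        (\<forall>a\<in>X. \<forall>b\<in>X. R th a b \<or> R th b a) \<and>
        (\<forall>a\<in>X. \<forall>b\<in>X. \<forall>c\<in>X. R th a b \<longrightarrow> R th b c \<longrightarrow> R th a c))"

definition scf :: "'i set \<Rightarrow> 'x set \<Rightarrow> ('i \<Rightarrow> 't set) \<Rightarrow> (('i \<Rightarrow> 't) \<Rightarrow> 'x) \<Rightarrow> bool" where
  "scf N X Theta f \<longleftrightarrow> (\<forall>th\<in>PiE N Theta. f th \<in> X)"

definition strategy_proof :: "'i set \<Rightarrow> ('i \<Rightarrow> 't set) \<Rightarrow> ('t \<Rightarrow> 'x \<Rightarrow> 'x \<Rightarrow> bool) \<Rightarrow> (('i \<Rightarrow> 't) \<Rightarrow> 'x) \<Rightarrow> bool" where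
  "strategy_proof N Theta R f \<longleftrightarrow>
     (\<forall>i\<in>N. \<forall>th\<in>PiE N Theta. \<forall>t'\<in>Theta i. R (th i) (f th) (f (th(i := t'))))"

text \<open>Histories: finite sequences of action profiles.  An action profile assigns
 to each mover an action (in a gradual mechanism, a set of types) and None to non-movers.\<close>
type_synonym ('i,'t) hist = "('i \<Rightarrow> 't set option) list"
type_synonym ('i,'t) infoset = "('i,'t) hist set"
type_synonym ('i,'t) strat = "('i,'t) infoset \<Rightarrow> 't set"

record ('i,'t,'x) gform =
  hists :: "('i,'t) hist set"
  movers :: "('i,'t) hist \<Rightarrow> 'i set"
  acts :: "'i \<Rightarrow> ('i,'t) hist \<Rightarrow> 't set set"
  infos :: "'i \<Rightarrow> ('i,'t) infoset set"
  outc :: "('i,'t) hist \<Rightarrow> 'x"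

definition terminal :: "('i,'t,'x) gform \<Rightarrow> ('i,'t) hist set" where
  "terminal G = {h \<in> hists G. \<not> (\<exists>h'\<in>hists G. strict_prefix h h')}"

definition nonterm :: "('i,'t,'x) gform \<Rightarrow> ('i,'t) hist set" where
  "nonterm G = hists G - terminal G"

definition decnodes :: "('i,'t,'x) gform \<Rightarrow> 'i \<Rightarrow> ('i,'t) hist set" where
  "decnodes G i = {h \<in> nonterm G. i \<in> movers G h}"

definition infoset_of :: "('i,'t,'x) gform \<Rightarrow> 'i \<Rightarrow> ('i,'t) hist \<Rightarrow> ('i,'t) infoset" where
  "infoset_of G i h = (THE I. I \<in> infos G i \<and> h \<in> I)"

text \<open>Experience of i along h: the sequence of own information sets visited and
 own actions taken at proper prefixes of h (used to state perfect recall).\<close>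
definition experience :: "('i,'t,'x) gform \<Rightarrow> 'i \<Rightarrow> ('i,'t) hist \<Rightarrow> (('i,'t) infoset \<times> 't set) list" where
  "experience G i h = map (\<lambda>k. (infoset_of G i (take k h), the ((h ! k) i)))
      (filter (\<lambda>k. i \<in> movers G (take k h)) [0..<length h])"

definition game_form :: "'i set \<Rightarrow> ('i,'t,'x) gform \<Rightarrow> bool" where
  "game_form N G \<longleftrightarrow>
     finite (hists G) \<and> [] \<in> hists G \<and>
     (\<forall>h\<in>hists G. \<forall>g. prefix g h \<longrightarrow> g \<in> hists G) \<and>
     [] \<in> nonterm G \<and> movers G [] = N \<and>
     (\<forall>h\<in>nonterm G. movers G h \<noteq> {} \<and> movers G h \<subseteq> N \<and>
        (\<forall>i\<in>movers G h. acts G i h \<noteq> {}) \<and>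
        (\<forall>a. h @ [a] \<in> hists G \<longleftrightarrow>
            (\<forall>i. (i \<in> movers G h \<longrightarrow> (\<exists>x. a i = Some x \<and> x \<in> acts G i h)) \<and>
                 (i \<notin> movers G h \<longrightarrow> a i = None)))) \<and>
     (\<forall>i\<in>N. partition_on (decnodes G i) (infos G i)) \<and>
     (\<forall>i. i \<notin> N \<longrightarrow> infos G i = {}) \<and>
     (\<forall>i\<in>N. \<forall>I\<in>infos G i. \<forall>h\<in>I. \<forall>h'\<in>I. acts G i h = acts G i h') \<and>
     (\<forall>i\<in>N. \<forall>I\<in>infos G i. \<forall>h\<in>I. \<forall>h'\<in>I. experience G i h = experience G i h')"

text \<open>\<open>\<Theta>_i(h)\<close>: last action of i in h, or \<open>\<Theta>_i\<close> if i has not acted.\<close>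
definition thetaH :: "('i \<Rightarrow> 't set) \<Rightarrow> 'i \<Rightarrow> ('i,'t) hist \<Rightarrow> 't set" where
  "thetaH Theta i h = foldl (\<lambda>S a. case a i of None \<Rightarrow> S | Some x \<Rightarrow> x) (Theta i) h"

definition profilesH :: "'i set \<Rightarrow> ('i \<Rightarrow> 't set) \<Rightarrow> ('i,'t) hist \<Rightarrow> ('i \<Rightarrow> 't) set" where
  "profilesH N Theta h = PiE N (\<lambda>i. thetaH Theta i h)"

definition thetaI :: "('i \<Rightarrow> 't set) \<Rightarrow> 'i \<Rightarrow> ('i,'t) infoset \<Rightarrow> 't set" where
  "thetaI Theta i I = thetaH Theta i (SOME h. h \<in> I)"

definition gradual_mechanism ::
  "'i set \<Rightarrow> 'x set \<Rightarrow> ('i \<Rightarrow> 't set) \<Rightarrow> (('i \<Rightarrow> 't) \<Rightarrow> 'x) \<Rightarrow> ('i,'t,'x) gform \<Rightarrow> bool" where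
  "gradual_mechanism N X Theta f G \<longleftrightarrow>
     game_form N G \<and> outc G ` terminal G \<subseteq> X \<and>
     (\<forall>i\<in>N. \<forall>h\<in>decnodes G i.
        (\<forall>a\<in>acts G i h. a \<noteq> {} \<and> a \<subseteq> Theta i) \<and>
        disjoint (acts G i h) \<and> \<Union>(acts G i h) = thetaH Theta i h) \<and>
     (\<forall>z\<in>terminal G. \<forall>th\<in>profilesH N Theta z. outc G z = f th)"

definition valid_strat :: "('i,'t,'x) gform \<Rightarrow> 'i \<Rightarrow> ('i,'t) strat \<Rightarrow> bool" where
  "valid_strat G i s \<longleftrightarrow> (\<forall>I\<in>infos G i. s I \<in> acts G i (SOME h. h \<in> I))"

definition follows :: "('i,'t,'x) gform \<Rightarrow> ('i \<Rightarrow> ('i,'t) strat) \<Rightarrow> ('i,'t) hist \<Rightarrow> bool" where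
  "follows G s h \<longleftrightarrow> (\<forall>k<length h. h ! k =
      (\<lambda>j. if j \<in> movers G (take k h) then Some (s j (infoset_of G j (take k h))) else None))"

definition zpath :: "('i,'t,'x) gform \<Rightarrow> ('i \<Rightarrow> ('i,'t) strat) \<Rightarrow> ('i,'t) hist" where
  "zpath G s = (THE z. z \<in> terminal G \<and> follows G s z)"

text \<open>h is consistent with the partial profile \<open>s_M\<close> (the components of s at agents in M).\<close>
definition consistent :: "'i set \<Rightarrow> ('i,'t,'x) gform \<Rightarrow> 'i set \<Rightarrow> ('i \<Rightarrow> ('i,'t) strat) \<Rightarrow> ('i,'t) hist \<Rightarrow> bool" where
  "consistent N G M s h \<longleftrightarrow>
     (\<exists>s'. (\<forall>i\<in>N. valid_strat G i (s' i)) \<and> (\<forall>i\<in>M. \<forall>I\<in>infos G i. s' i I = s i I) \<and>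
           prefix h (zpath G s'))"

definition consistent_type :: "'i set \<Rightarrow> ('i \<Rightarrow> 't set) \<Rightarrow> ('i,'t,'x) gform \<Rightarrow> 'i set \<Rightarrow> ('i \<Rightarrow> ('i,'t) strat) \<Rightarrow> ('i \<Rightarrow> 't) \<Rightarrow> bool" where
  "consistent_type N Theta G M s th \<longleftrightarrow>
     consistent N G M s (THE z. z \<in> terminal G \<and> th \<in> profilesH N Theta z)"

definition unconditional :: "('i \<Rightarrow> 't set) \<Rightarrow> ('i,'t,'x) gform \<Rightarrow> 'i \<Rightarrow> 't \<Rightarrow> ('i,'t) strat \<Rightarrow> bool" where
  "unconditional Theta G i t s \<longleftrightarrow>
     (\<forall>h\<in>decnodes G i. t \<in> thetaH Theta i h \<longrightarrow> t \<in> s (infoset_of G i h))"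

definition incentive_compatible ::
  "'i set \<Rightarrow> ('i \<Rightarrow> 't set) \<Rightarrow> ('t \<Rightarrow> 'x \<Rightarrow> 'x \<Rightarrow> bool) \<Rightarrow> ('i,'t,'x) gform \<Rightarrow> bool" where
  "incentive_compatible N Theta R G \<longleftrightarrow>
     (\<forall>i\<in>N. \<forall>t\<in>Theta i. \<forall>st si s.
        valid_strat G i st \<longrightarrow> unconditional Theta G i t st \<longrightarrow> valid_strat G i si \<longrightarrow>
        (\<forall>j\<in>N. valid_strat G j (s j)) \<longrightarrow>
        R t (outc G (zpath G (s(i := st)))) (outc G (zpath G (s(i := si)))))"

definition info_prec :: "('i,'t) infoset \<Rightarrow> ('i,'t) infoset \<Rightarrow> bool" where
  "info_prec I J \<longleftrightarrow> (\<exists>h\<in>I. \<exists>h'\<in>J. strict_prefix h h')"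

definition immediate_succ :: "('i,'t,'x) gform \<Rightarrow> 'i \<Rightarrow> ('i,'t) infoset \<Rightarrow> ('i,'t) infoset \<Rightarrow> bool" where
  "immediate_succ G i I J \<longleftrightarrow> info_prec I J \<and>
     \<not> (\<exists>K\<in>infos G i. info_prec I K \<and> info_prec K J)"

definition reaction_proof ::
  "'i set \<Rightarrow> ('i \<Rightarrow> 't set) \<Rightarrow> ('t \<Rightarrow> 'x \<Rightarrow> 'x \<Rightarrow> bool) \<Rightarrow> (('i \<Rightarrow> 't) \<Rightarrow> 'x) \<Rightarrow> ('i,'t,'x) gform \<Rightarrow> bool" where
  "reaction_proof N Theta R f G \<longleftrightarrow>
     (\<forall>i\<in>N. \<forall>j\<in>N. i \<noteq> j \<longrightarrow>
       (\<forall>I\<in>infos G i. \<forall>I1\<in>infos G i. \<forall>I2\<in>infos G i.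
          I1 \<noteq> I2 \<longrightarrow> immediate_succ G i I I1 \<longrightarrow> immediate_succ G i I I2 \<longrightarrow>
          thetaI Theta i I1 = thetaI Theta i I2 \<longrightarrow>
          (\<forall>h1\<in>I1. \<forall>h2\<in>I2. \<forall>s.
             (\<forall>k\<in>N - {i, j}. valid_strat G k (s k)) \<longrightarrow>
             consistent N G (N - {i, j}) s h1 \<longrightarrow> consistent N G (N - {i, j}) s h2 \<longrightarrow>
             (\<forall>th1\<in>profilesH N Theta h1. \<forall>th2\<in>profilesH N Theta h2.
                consistent_type N Theta G (N - {i, j}) s th1 \<longrightarrow>
                consistent_type N Theta G (N - {i, j}) s th2 \<longrightarrow>
                R (th1 j) (f th1) (f th2)))))"

end

(*
  Compare the path z1 of an unconditional
  strategy of agent a with the path z2 of a deviation.  If some other agent b has incomparable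
  experiences along z1 and z2, then, as b plays the same strategy on both, these experiences first
  differ right after a common information set, at two distinct immediate successors with the same
  recorded action; reaction-proofness for the pair (b, a), applied to a type profile on z1 giving
  a its true type, compares the outcomes.  Otherwise the remaining type sets of every other agent
  along z1 and z2 are nested, one profile of the others fits both terminal histories, and
  strategy-proofness of f compares the outcomes.

  Conversely, extend the two histories of a reaction to terminal histories reached under the
  given behaviour of the others.  By perfect recall the reacting agent i never takes different
  actions at an information set common to both paths, so one strategy of i follows both; agent j,
  playing unconditionally for its type on the first path or imitating its behaviour on the second,
  then faces exactly the comparison that incentive compatibility makes.
*)

theory Submission
  imports Defs
begin

section \<open>Prefixes and experiences\<close>

lemma strict_prefix_take: "n < length h \<Longrightarrow> strict_prefix (take n h) h"
  by (metis length_take min.absorb4 nat_less_le take_is_prefix strict_prefix_def)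

lemma strict_prefixD_take: "strict_prefix g h \<Longrightarrow> g = take (length g) h \<and> length g < length h"
  by (metis append_eq_conv_conj prefix_def prefix_order.less_le_not_le prefix_length_le take_all_iff
      strict_prefix_def le_neq_implies_less)

lemma prefix_eq_take: "prefix xs ys \<Longrightarrow> xs = take (length xs) ys"
  by (auto simp: prefix_def)

lemma prefix_or_prefix_if_take_eq:
  assumes "\<And>n. n \<le> length h \<Longrightarrow> n \<le> length h' \<Longrightarrow> take n h = take n h'"
  shows "prefix h h' \<or> prefix h' h"
  by (metis assms nle_le take_all take_is_prefix)

lemma experience_snoc:
  "experience G i (h @ [a]) = experience G i h @
     (if i \<in> movers G h then [(infoset_of G i h, the (a i))] else [])"
proof -
  have "map (\<lambda>k. (infoset_of G i (take k (h @ [a])), the (((h @ [a]) ! k) i)))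
      (filter (\<lambda>k. i \<in> movers G (take k (h @ [a]))) [0..<length h])
    = map (\<lambda>k. (infoset_of G i (take k h), the ((h ! k) i)))
      (filter (\<lambda>k. i \<in> movers G (take k h)) [0..<length h])"
    by (rule map_cong) (auto simp: nth_append intro!: filter_cong)
  then show ?thesis unfolding experience_def by simp
qed

lemma prefix_experience_take: "prefix (experience G i (take n h)) (experience G i h)"
proof (induction h arbitrary: n rule: rev_induct)
  case (snoc a h)
  then show ?case
    by (cases "n \<le> length h") (simp_all add: experience_snoc prefix_append)
qed simp

lemma experience_take_nth:
  assumes "n < length q" "i \<in> movers G (take n q)"
  shows "length (experience G i (take n q)) < length (experience G i q) \<and>
    experience G i q ! length (experience G i (take n q)) = (infoset_of G i (take n q), the ((q!n) i))"
proof -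
  have "take (Suc n) q = take n q @ [q!n]" using assms(1) by (simp add: take_Suc_conv_app_nth)
  then have "prefix (experience G i (take n q) @ [(infoset_of G i (take n q), the ((q!n) i))])
      (experience G i q)"
    using prefix_experience_take[of G i "Suc n" q] assms(2) by (simp add: experience_snoc)
  then show ?thesis
    by (metis (no_types, lifting) append_eq_conv_conj length_append_singleton less_eq_Suc_le
        nth_append_length nth_take prefix_def prefix_length_le lessI)
qed

lemma experience_nth_ex:
  "l < length (experience G i h) \<Longrightarrow> \<exists>k<length h. i \<in> movers G (take k h) \<and>
     length (experience G i (take k h)) = l \<and>
     experience G i h ! l = (infoset_of G i (take k h), the ((h!k) i))"
proof (induction h arbitrary: l rule: rev_induct)
  case Nil then show ?case by (simp add: experience_def)
next
  case (snoc a h)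
  show ?case
  proof (cases "l < length (experience G i h)")
    case True
    with snoc.IH obtain k where "k<length h" "i \<in> movers G (take k h)"
      "length (experience G i (take k h)) = l"
      "experience G i h ! l = (infoset_of G i (take k h), the ((h!k) i))" by blast
    with True show ?thesis
      by (intro exI[of _ k]) (auto simp: experience_snoc nth_append)
  next
    case False
    then have "i \<in> movers G h" "l = length (experience G i h)"
      using snoc.prems by (auto simp: experience_snoc split: if_splits)
    then show ?thesis
      by (intro exI[of _ "length h"]) (auto simp: experience_snoc nth_append)
  qed
qed

lemma experience_take_mem:
  assumes "k < length z" "m \<in> movers G (take k z)"
  shows "(infoset_of G m (take k z), the ((z!k) m)) \<in> set (experience G m z)"
  using experience_take_nth[OF assms] by (metis nth_mem)

section \<open>Game forms\<close>

lemma game_formD: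
  assumes "game_form N G"
  shows game_form_finite: "finite (hists G)"
    and hists_Nil: "[] \<in> hists G"
    and game_form_prefix_closed: "\<forall>h\<in>hists G. \<forall>g. prefix g h \<longrightarrow> g \<in> hists G"
    and Nil_in_nonterm: "[] \<in> nonterm G"
    and movers_Nil: "movers G [] = N"
    and nonterm_step: "\<forall>h\<in>nonterm G. movers G h \<noteq> {} \<and> movers G h \<subseteq> N \<and>
        (\<forall>i\<in>movers G h. acts G i h \<noteq> {}) \<and>
        (\<forall>a. h @ [a] \<in> hists G \<longleftrightarrow>
            (\<forall>i. (i \<in> movers G h \<longrightarrow> (\<exists>x. a i = Some x \<and> x \<in> acts G i h)) \<and>
                 (i \<notin> movers G h \<longrightarrow> a i = None)))"
    and game_form_infos_partition: "\<forall>i\<in>N. partition_on (decnodes G i) (infos G i)"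
    and infos_outside: "\<forall>i. i \<notin> N \<longrightarrow> infos G i = {}"
    and acts_on_infoset: "\<forall>i\<in>N. \<forall>I\<in>infos G i. \<forall>h\<in>I. \<forall>h'\<in>I. acts G i h = acts G i h'"
    and perfect_recall: "\<forall>i\<in>N. \<forall>I\<in>infos G i. \<forall>h\<in>I. \<forall>h'\<in>I. experience G i h = experience G i h'"
  using assms unfolding game_form_def apply (simp_all only:) by (elim conjE; assumption)+

lemma hists_prefix_closed: "game_form N G \<Longrightarrow> h \<in> hists G \<Longrightarrow> prefix g h \<Longrightarrow> g \<in> hists G"
  using game_form_prefix_closed[of N G] by blast

lemma terminal_in_hists: "z \<in> terminal G \<Longrightarrow> z \<in> hists G"
  unfolding terminal_def by simp

lemma terminal_prefix_eq: "z \<in> terminal G \<Longrightarrow> h \<in> hists G \<Longrightarrow> prefix z h \<Longrightarrow> h = z"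
  unfolding terminal_def by (auto simp: strict_prefix_def)

lemma prefix_terminal_if_comparable:
  "h \<in> hists G \<Longrightarrow> z \<in> terminal G \<Longrightarrow> prefix h z \<or> prefix z h \<Longrightarrow> prefix h z"
  using terminal_prefix_eq by blast

lemma take_in_nonterm:
  assumes "game_form N G" "h \<in> hists G" "k < length h"
  shows "take k h \<in> nonterm G"
  using hists_prefix_closed[OF assms(1,2) take_is_prefix] strict_prefix_take[OF assms(3)] assms(2)
  unfolding nonterm_def terminal_def by blast

lemma snoc_in_hists_iff:
  assumes "game_form N G" "g \<in> nonterm G"
  shows "g @ [a] \<in> hists G \<longleftrightarrow>
            (\<forall>i. (i \<in> movers G g \<longrightarrow> (\<exists>x. a i = Some x \<and> x \<in> acts G i g)) \<and>
                 (i \<notin> movers G g \<longrightarrow> a i = None))"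
  using nonterm_step[OF assms(1)] assms(2) by blast

lemma hist_nth_action:
  assumes "game_form N G" "h \<in> hists G" "k < length h"
  shows "(i \<in> movers G (take k h) \<longrightarrow> (\<exists>x. (h!k) i = Some x \<and> x \<in> acts G i (take k h))) \<and>
         (i \<notin> movers G (take k h) \<longrightarrow> (h!k) i = None)"
proof -
  have "take k h @ [h!k] \<in> hists G"
    using hists_prefix_closed[OF assms(1,2) take_is_prefix, of "Suc k"] assms(3)
    by (simp add: take_Suc_conv_app_nth)
  then show ?thesis using snoc_in_hists_iff[OF assms(1) take_in_nonterm[OF assms]] by blast
qed

lemma take_in_decnodes:
  "game_form N G \<Longrightarrow> h \<in> hists G \<Longrightarrow> k < length h \<Longrightarrow> i \<in> movers G (take k h) \<Longrightarrow>
   take k h \<in> decnodes G i"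
  using take_in_nonterm[of N G h k] by (simp add: decnodes_def)

lemma nonterm_movers_acts:
  assumes "game_form N G" "h \<in> nonterm G"
  shows "movers G h \<subseteq> N" "\<forall>i\<in>movers G h. acts G i h \<noteq> {}"
proof -
  note step = bspec[OF nonterm_step[OF assms(1)] assms(2)]
  show "movers G h \<subseteq> N" using conjunct1[OF conjunct2[OF step]] .
  show "\<forall>i\<in>movers G h. acts G i h \<noteq> {}" using conjunct1[OF conjunct2[OF conjunct2[OF step]]] .
qed

lemma acts_nonempty: "game_form N G \<Longrightarrow> h \<in> decnodes G i \<Longrightarrow> acts G i h \<noteq> {}"
  using nonterm_movers_acts(2)[of N G h] unfolding decnodes_def by blast

lemma decnodes_agent: "game_form N G \<Longrightarrow> h \<in> decnodes G i \<Longrightarrow> i \<in> N"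
  using nonterm_movers_acts(1)[of N G h] unfolding decnodes_def by blast

lemma decnodes_in_hists: "h \<in> decnodes G i \<Longrightarrow> h \<in> hists G"
  unfolding decnodes_def nonterm_def by simp

lemma infos_agent: "game_form N G \<Longrightarrow> I \<in> infos G i \<Longrightarrow> i \<in> N"
  using infos_outside[of N G] by blast

lemma infos_partition: "game_form N G \<Longrightarrow> I \<in> infos G i \<Longrightarrow> partition_on (decnodes G i) (infos G i)"
  using game_form_infos_partition[of N G] infos_agent[of N G I i] by blast

lemma infos_in_decnodes: "game_form N G \<Longrightarrow> I \<in> infos G i \<Longrightarrow> h \<in> I \<Longrightarrow> h \<in> decnodes G i"
  using partition_onD1[OF infos_partition[of N G I i]] by blast

lemma infoset_of_eq:
  assumes "game_form N G" "I \<in> infos G i" "h \<in> I"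
  shows "infoset_of G i h = I"
  unfolding infoset_of_def
proof (rule the_equality)
  fix J assume "J \<in> infos G i \<and> h \<in> J"
  then show "J = I"
    using disjointD[OF partition_onD2[OF infos_partition[OF assms(1,2)]], of J I] assms by blast
qed (use assms in blast)

lemma infoset_of_decnode:
  assumes "game_form N G" "h \<in> decnodes G i"
  shows "infoset_of G i h \<in> infos G i \<and> h \<in> infoset_of G i h"
proof -
  have "i \<in> N" by (rule decnodes_agent[OF assms])
  then obtain I where "I \<in> infos G i" "h \<in> I"
    using partition_onD1[OF game_form_infos_partition[rule_format, OF assms(1)]] assms(2) by blast
  then show ?thesis using infoset_of_eq[OF assms(1)] by simp
qed

lemma experience_eq_on_infoset:
  "game_form N G \<Longrightarrow> I \<in> infos G i \<Longrightarrow> h \<in> I \<Longrightarrow> h' \<in> I \<Longrightarrow> experience G i h = experience G i h'"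
  using perfect_recall[of N G] infos_agent[of N G I i] by blast

lemma acts_eq_on_infoset:
  "game_form N G \<Longrightarrow> I \<in> infos G i \<Longrightarrow> h \<in> I \<Longrightarrow> h' \<in> I \<Longrightarrow> acts G i h = acts G i h'"
  using acts_on_infoset[of N G] infos_agent[of N G I i] by blast

lemma acts_some_infoset_of:
  assumes "game_form N G" "h \<in> decnodes G i"
  shows "acts G i (SOME h'. h' \<in> infoset_of G i h) = acts G i h"
  using infoset_of_decnode[OF assms] acts_eq_on_infoset[OF assms(1)] by (metis someI)

lemma experience_length_strict_mono:
  assumes "p \<in> decnodes G b" "strict_prefix p q"
  shows "length (experience G b p) < length (experience G b q)"
proof -
  have pq: "p = take (length p) q" "length p < length q" using strict_prefixD_take[OF assms(2)] by auto
  then have "b \<in> movers G (take (length p) q)" using assms(1) by (simp add: decnodes_def)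
  then show ?thesis using experience_take_nth[OF pq(2)] pq(1) by metis
qed

section \<open>Type sets along histories\<close>

lemma thetaH_snoc: "thetaH Theta i (h @ [a]) = (case a i of None \<Rightarrow> thetaH Theta i h | Some x \<Rightarrow> x)"
  unfolding thetaH_def by simp

lemma thetaH_Nil: "thetaH Theta i [] = Theta i"
  by (simp add: thetaH_def)

lemma thetaH_experience:
  assumes "game_form N G" "h \<in> hists G"
  shows "thetaH Theta i h = (if experience G i h = [] then Theta i else snd (last (experience G i h)))"
  using assms(2)
proof (induction h rule: rev_induct)
  case Nil then show ?case by (simp add: thetaH_Nil experience_def)
next
  case (snoc a h)
  have hh: "h \<in> hists G" using hists_prefix_closed[OF assms(1) snoc.prems] by simp
  have nt: "h \<in> nonterm G" using take_in_nonterm[OF assms(1) snoc.prems, of "length h"] by simp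
  have st: "(i \<in> movers G h \<longrightarrow> (\<exists>x. a i = Some x \<and> x \<in> acts G i h)) \<and>
                 (i \<notin> movers G h \<longrightarrow> a i = None)"
    using spec[OF iffD1[OF snoc_in_hists_iff[OF assms(1) nt, of a] snoc.prems], of i] .
  show ?case
  proof (cases "i \<in> movers G h")
    case True
    then obtain x where "a i = Some x" using st by blast
    then show ?thesis using True by (simp add: thetaH_snoc experience_snoc)
  next
    case False
    then have "a i = None" using st by blast
    then show ?thesis using False snoc.IH[OF hh] by (simp add: thetaH_snoc experience_snoc)
  qed
qed

lemma thetaH_eq_on_infoset:
  assumes "game_form N G" "I \<in> infos G i" "h \<in> I" "h' \<in> I"
  shows "thetaH Theta i h = thetaH Theta i h'"
  using thetaH_experience[OF assms(1) decnodes_in_hists[OF infos_in_decnodes[OF assms(1,2)]]]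
    experience_eq_on_infoset[OF assms] assms(3,4) by metis

lemma thetaI_eq_thetaH:
  "game_form N G \<Longrightarrow> I \<in> infos G i \<Longrightarrow> h \<in> I \<Longrightarrow> thetaI Theta i I = thetaH Theta i h"
  unfolding thetaI_def by (metis someI thetaH_eq_on_infoset)

lemma gradual_mechanismD:
  assumes "gradual_mechanism N X Theta f G"
  shows gm_game_form: "game_form N G"
   and gm_acts: "\<forall>i\<in>N. \<forall>h\<in>decnodes G i.
        (\<forall>a\<in>acts G i h. a \<noteq> {} \<and> a \<subseteq> Theta i) \<and>
        disjoint (acts G i h) \<and> \<Union>(acts G i h) = thetaH Theta i h"
   and gm_outc: "\<forall>z\<in>terminal G. \<forall>th\<in>profilesH N Theta z. outc G z = f th"
  using assms unfolding gradual_mechanism_def apply (simp_all only:) by (elim conjE; assumption)+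

lemma gm_acts_decnode:
  assumes "gradual_mechanism N X Theta f G" "h \<in> decnodes G i"
  shows "(\<forall>a\<in>acts G i h. a \<noteq> {} \<and> a \<subseteq> Theta i) \<and>
        disjoint (acts G i h) \<and> \<Union>(acts G i h) = thetaH Theta i h"
proof -
  have "i \<in> N" by (rule decnodes_agent[OF gm_game_form[OF assms(1)] assms(2)])
  then show ?thesis using bspec[OF bspec[OF gm_acts[OF assms(1)]] assms(2)] by simp
qed

lemma outc_eq_scf:
  "gradual_mechanism N X Theta f G \<Longrightarrow> z \<in> terminal G \<Longrightarrow> th \<in> profilesH N Theta z \<Longrightarrow> outc G z = f th"
  by (drule gm_outc) (drule (1) bspec, drule (1) bspec)

lemma thetaH_take_Suc:
  assumes "n < length h" "(h!n) i = Some x"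
  shows "thetaH Theta i (take (Suc n) h) = x"
proof -
  have "take (Suc n) h = take n h @ [h!n]" using assms(1) by (simp add: take_Suc_conv_app_nth)
  then show ?thesis using assms(2) by (simp add: thetaH_snoc)
qed

lemma thetaH_take_Suc_None:
  assumes "n < length h" "(h!n) i = None"
  shows "thetaH Theta i (take (Suc n) h) = thetaH Theta i (take n h)"
proof -
  have "take (Suc n) h = take n h @ [h!n]" using assms(1) by (simp add: take_Suc_conv_app_nth)
  then show ?thesis using assms(2) by (simp add: thetaH_snoc)
qed

lemma thetaH_take_Suc_subset:
  assumes gm: "gradual_mechanism N X Theta f G" and h: "h \<in> hists G"
  shows "thetaH Theta i (take (Suc n) h) \<subseteq> thetaH Theta i (take n h)"
proof (cases "n < length h")
  case True
  have gf: "game_form N G" by (rule gm_game_form[OF gm])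
  note ga = hist_nth_action[OF gf h True, of i]
  show ?thesis
  proof (cases "i \<in> movers G (take n h)")
    case mv: True
    then obtain x where x: "(h!n) i = Some x" "x \<in> acts G i (take n h)" using ga by blast
    have dn: "take n h \<in> decnodes G i" by (rule take_in_decnodes[OF gf h True mv])
    have "\<Union>(acts G i (take n h)) = thetaH Theta i (take n h)" using gm_acts_decnode[OF gm dn] by simp
    then have "x \<subseteq> thetaH Theta i (take n h)" using x(2) by blast
    then show ?thesis using thetaH_take_Suc[OF True x(1)] by simp
  next
    case False
    then have "(h!n) i = None" using ga by simp
    then show ?thesis using thetaH_take_Suc_None[OF True] by simp
  qed
next
  case False
  then show ?thesis by simp
qed

lemma thetaH_take_antimono:
  assumes gm: "gradual_mechanism N X Theta f G" and h: "h \<in> hists G" and nm: "n \<le> m"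
  shows "thetaH Theta i (take m h) \<subseteq> thetaH Theta i (take n h)"
  using lift_Suc_antimono_le[of "\<lambda>n. thetaH Theta i (take n h)", OF thetaH_take_Suc_subset[OF gm h] nm] .

lemma thetaH_prefix_antimono:
  assumes gm: "gradual_mechanism N X Theta f G" and h: "h \<in> hists G" and p: "prefix g h"
  shows "thetaH Theta i h \<subseteq> thetaH Theta i g"
proof -
  obtain t where t: "h = g @ t" using p by (auto simp: prefix_def)
  have "g = take (length g) h" using t by simp
  moreover have "h = take (length h) h" by simp
  moreover have "length g \<le> length h" using t by simp
  ultimately show ?thesis using thetaH_take_antimono[OF gm h, of "length g" "length h" i] by metis
qed

lemma thetaH_subset_action:
  assumes gm: "gradual_mechanism N X Theta f G" and h: "h \<in> hists G"
    and n: "n < length h" and x: "(h!n) b = Some x"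
  shows "thetaH Theta b h \<subseteq> x"
  using thetaH_take_antimono[OF gm h, of "Suc n" "length h" b] thetaH_take_Suc[OF n x] n by simp

lemma action_eq_if_common_type:
  assumes gm: "gradual_mechanism N X Theta f G" and dn: "h \<in> decnodes G b"
    and "x \<in> acts G b h" "y \<in> acts G b h" "t \<in> x" "t \<in> y"
  shows "x = y"
  using disjointD[of "acts G b h" x y] gm_acts_decnode[OF gm dn] assms(3-) by blast

lemma thetaH_subset_Theta:
  assumes gm: "gradual_mechanism N X Theta f G" and h: "h \<in> hists G"
  shows "thetaH Theta i h \<subseteq> Theta i"
  using thetaH_prefix_antimono[OF gm h, of "[]" i] by (simp add: thetaH_Nil)

lemma Theta_nonempty:
  assumes gm: "gradual_mechanism N X Theta f G" and iN: "i \<in> N"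
  shows "Theta i \<noteq> {}"
proof -
  have gf: "game_form N G" by (rule gm_game_form[OF gm])
  have dn: "[] \<in> decnodes G i" using Nil_in_nonterm[OF gf] movers_Nil[OF gf] iN by (simp add: decnodes_def)
  have "acts G i [] \<noteq> {}" by (rule acts_nonempty[OF gf dn])
  then obtain a where a: "a \<in> acts G i []" by blast
  then have "a \<noteq> {} \<and> a \<subseteq> Theta i" using gm_acts_decnode[OF gm dn] by blast
  then show ?thesis by blast
qed

lemma thetaH_nonempty:
  assumes gm: "gradual_mechanism N X Theta f G" and iN: "i \<in> N" and h: "h \<in> hists G"
  shows "thetaH Theta i h \<noteq> {}"
proof -
  have gf: "game_form N G" by (rule gm_game_form[OF gm])
  show ?thesis
  proof (cases "experience G i h = []")
    case True
    then show ?thesis using thetaH_experience[OF gf h, of Theta i] Theta_nonempty[OF gm iN] by simp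
  next
    case False
    define l where "l = length (experience G i h) - 1"
    have l: "l < length (experience G i h)" using False unfolding l_def by simp
    have last: "last (experience G i h) = experience G i h ! l"
      using False unfolding l_def by (simp add: last_conv_nth)
    obtain k where k: "k<length h" "i \<in> movers G (take k h)"
      "experience G i h ! l = (infoset_of G i (take k h), the ((h!k) i))"
      using experience_nth_ex[OF l] by blast
    obtain x where x: "(h!k) i = Some x" "x \<in> acts G i (take k h)" using hist_nth_action[OF gf h k(1), of i] k(2) by blast
    have dn: "take k h \<in> decnodes G i" by (rule take_in_decnodes[OF gf h k(1,2)])
    have "x \<noteq> {}" using gm_acts_decnode[OF gm dn] x(2) by blast
    then show ?thesis using thetaH_experience[OF gf h, of Theta i] False last k(3) x(1) by simp
  qed
qed

lemma profilesH_memD: "th \<in> profilesH N Theta h \<Longrightarrow> i \<in> N \<Longrightarrow> th i \<in> thetaH Theta i h"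
  unfolding profilesH_def by (rule PiE_mem)

lemma profilesH_prefix_mono:
  assumes gm: "gradual_mechanism N X Theta f G" and z: "z \<in> hists G" and p: "prefix h z"
    and th: "th \<in> profilesH N Theta z"
  shows "th \<in> profilesH N Theta h"
  using th unfolding profilesH_def
  by (rule rev_subsetD[OF _ PiE_mono]) (rule thetaH_prefix_antimono[OF gm z p])

lemma common_profile_take_eq:
  assumes gm: "gradual_mechanism N X Theta f G" and h: "h \<in> hists G" and h': "h' \<in> hists G"
    and th: "th \<in> profilesH N Theta h" and th': "th \<in> profilesH N Theta h'"
  shows "n \<le> length h \<Longrightarrow> n \<le> length h' \<Longrightarrow> take n h = take n h'"
proof (induction n)
  case 0 then show ?case by simp
next
  case (Suc n)
  have gf: "game_form N G" by (rule gm_game_form[OF gm])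
  have n: "n < length h" "n < length h'" using Suc.prems by auto
  have IH: "take n h = take n h'" using Suc.IH n by simp
  have "h!n = h'!n"
  proof
    fix b
    note ga = hist_nth_action[OF gf h n(1), of b]
    note ga' = hist_nth_action[OF gf h' n(2), of b]
    show "(h!n) b = (h'!n) b"
    proof (cases "b \<in> movers G (take n h)")
      case mv: True
      then have mv': "b \<in> movers G (take n h')" using IH by simp
      obtain x where x: "(h!n) b = Some x" "x \<in> acts G b (take n h)" using ga mv by blast
      obtain x' where x': "(h'!n) b = Some x'" "x' \<in> acts G b (take n h)" using ga' mv' IH by auto
      have dn: "take n h \<in> decnodes G b" by (rule take_in_decnodes[OF gf h n(1) mv])
      have bN: "b \<in> N" by (rule decnodes_agent[OF gf dn])
      have "th b \<in> x" "th b \<in> x'"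
        using thetaH_subset_action[OF gm h n(1) x(1)] thetaH_subset_action[OF gm h' n(2) x'(1)]
          profilesH_memD[OF th bN] profilesH_memD[OF th' bN] by auto
      then show ?thesis using action_eq_if_common_type[OF gm dn x(2) x'(2)] x x' by simp
    next
      case nmv: False
      then have nmv': "b \<notin> movers G (take n h')" using IH by simp
      show ?thesis using ga ga' nmv nmv' by simp
    qed
  qed
  then show ?case using IH n by (simp add: take_Suc_conv_app_nth)
qed

lemma common_profile_prefix_terminal:
  assumes gm: "gradual_mechanism N X Theta f G" and h: "h \<in> hists G" and z: "z \<in> terminal G"
    and th: "th \<in> profilesH N Theta h" and th': "th \<in> profilesH N Theta z"
  shows "prefix h z"
proof -
  have "prefix h z \<or> prefix z h"
    by (rule prefix_or_prefix_if_take_eq) (rule common_profile_take_eq[OF gm h terminal_in_hists[OF z] th th'])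
  then show ?thesis by (rule prefix_terminal_if_comparable[OF h z])
qed

lemma terminal_of_profile_unique:
  assumes gm: "gradual_mechanism N X Theta f G" and z: "z \<in> terminal G" and z': "z' \<in> terminal G"
    and th: "th \<in> profilesH N Theta z" and th': "th \<in> profilesH N Theta z'"
  shows "z = z'"
proof -
  have "prefix z z'" by (rule common_profile_prefix_terminal[OF gm terminal_in_hists[OF z] z' th th'])
  then show ?thesis using terminal_prefix_eq[OF z terminal_in_hists[OF z']] by simp
qed

lemma terminal_of_profile_eq:
  assumes gm: "gradual_mechanism N X Theta f G" and z: "z \<in> terminal G" and th: "th \<in> profilesH N Theta z"
  shows "(THE z. z \<in> terminal G \<and> th \<in> profilesH N Theta z) = z"
proof (rule the_equality)
  show "z \<in> terminal G \<and> th \<in> profilesH N Theta z" using z th by simp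
  fix z' assume "z' \<in> terminal G \<and> th \<in> profilesH N Theta z'"
  then show "z' = z" using terminal_of_profile_unique[OF gm _ z _ th] by blast
qed

lemma snoc_move_in_hists:
  assumes gf: "game_form N G" and g: "g \<in> nonterm G"
    and c: "\<And>b. b \<in> movers G g \<Longrightarrow> c b \<in> acts G b g"
  shows "g @ [\<lambda>b. if b \<in> movers G g then Some (c b) else None] \<in> hists G"
  using c by (simp add: snoc_in_hists_iff[OF gf g])

lemma terminal_ex_if_extendable:
  assumes gf: "game_form N G" and start: "P r" and hists: "\<And>g. P g \<Longrightarrow> g \<in> hists G"
    and extend: "\<And>g. P g \<Longrightarrow> g \<in> nonterm G \<Longrightarrow> \<exists>a. P (g @ [a])"
  shows "\<exists>z\<in>terminal G. P z"
proof -
  have "\<forall>g. P g \<longrightarrow> length g < Suc (Max (length ` hists G))"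
    using hists game_form_finite[OF gf] by (simp add: le_imp_less_Suc)
  then obtain g where g: "P g" "\<And>g'. P g' \<Longrightarrow> length g' \<le> length g"
    using ex_has_greatest_nat[of P r length] start by blast
  have "g \<in> terminal G"
  proof (rule ccontr)
    assume "g \<notin> terminal G"
    then have "g \<in> nonterm G" using hists[OF g(1)] unfolding nonterm_def by blast
    then obtain a where "P (g @ [a])" using extend[OF g(1)] by blast
    then show False using g(2) by fastforce
  qed
  then show ?thesis using g(1) by blast
qed

lemma terminal_extension_with_profile:
  assumes gm: "gradual_mechanism N X Theta f G" and h: "h \<in> hists G" and th: "th \<in> profilesH N Theta h"
  shows "\<exists>z\<in>terminal G. prefix h z \<and> th \<in> profilesH N Theta z"
proof -
  have gf: "game_form N G" by (rule gm_game_form[OF gm])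
  have "\<exists>a. g @ [a] \<in> hists G \<and> prefix h (g @ [a]) \<and> th \<in> profilesH N Theta (g @ [a])"
    if g: "g \<in> hists G \<and> prefix h g \<and> th \<in> profilesH N Theta g" and nt: "g \<in> nonterm G" for g
  proof -
    define c where "c b = (SOME x. x \<in> acts G b g \<and> th b \<in> x)" for b
    have c: "c b \<in> acts G b g \<and> th b \<in> c b" if "b \<in> movers G g" for b
    proof -
      have dn: "g \<in> decnodes G b" using nt that by (simp add: decnodes_def)
      then have "th b \<in> \<Union>(acts G b g)"
        using profilesH_memD[OF conjunct2[OF conjunct2[OF g]] decnodes_agent[OF gf dn]]
          gm_acts_decnode[OF gm dn] by simp
      then show ?thesis unfolding c_def by (metis (mono_tags, lifting) UnionE someI)
    qed
    define a where "a = (\<lambda>b. if b \<in> movers G g then Some (c b) else None)"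
    have "g @ [a] \<in> hists G" unfolding a_def using snoc_move_in_hists[OF gf nt] c by blast
    moreover have "th \<in> profilesH N Theta (g @ [a])"
      using g c unfolding profilesH_def PiE_iff thetaH_snoc a_def by auto
    ultimately show ?thesis using g by (auto simp: prefix_append)
  qed
  then have "\<exists>z\<in>terminal G. z \<in> hists G \<and> prefix h z \<and> th \<in> profilesH N Theta z"
    using h th by (intro terminal_ex_if_extendable[OF gf, where r = h]) auto
  then show ?thesis by blast
qed

lemma thetaH_antimono_experience:
  assumes gm: "gradual_mechanism N X Theta f G" and bN: "b \<in> N" and h: "h \<in> hists G" and h': "h' \<in> hists G"
    and p: "prefix (experience G b h) (experience G b h')"
  shows "thetaH Theta b h' \<subseteq> thetaH Theta b h"
proof -
  have gf: "game_form N G" by (rule gm_game_form[OF gm])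
  show ?thesis
  proof (cases "experience G b h = []")
    case True
    then show ?thesis using thetaH_experience[OF gf h, of Theta b] thetaH_subset_Theta[OF gm h'] by simp
  next
    case False
    define L where "L = length (experience G b h)"
    have L: "0 < L" using False unfolding L_def by simp
    have LL: "L \<le> length (experience G b h')" using prefix_length_le[OF p] unfolding L_def by simp
    then have l1: "L - 1 < length (experience G b h')" using L by simp
    obtain k where k: "k<length h'" "b \<in> movers G (take k h')"
      "experience G b h' ! (L-1) = (infoset_of G b (take k h'), the ((h'!k) b))"
      using experience_nth_ex[OF l1] by blast
    obtain x where x: "(h'!k) b = Some x" using hist_nth_action[OF gf h' k(1), of b] k(2) by blast
    have "thetaH Theta b h' \<subseteq> x" by (rule thetaH_subset_action[OF gm h' k(1) x])
    also have "x = snd (experience G b h' ! (L-1))" using k(3) x by simp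
    also have "\<dots> = snd (experience G b h ! (L-1))"
    proof -
      have "experience G b h = take L (experience G b h')" using prefix_eq_take[OF p] unfolding L_def by simp
      then show ?thesis using L by simp
    qed
    also have "\<dots> = thetaH Theta b h"
      using thetaH_experience[OF gf h, of Theta b] False unfolding L_def by (simp add: last_conv_nth)
    finally show ?thesis .
  qed
qed

section \<open>Playing strategy profiles\<close>

lemma followsD: "follows G s h \<Longrightarrow> k < length h \<Longrightarrow> h ! k =
      (\<lambda>j. if j \<in> movers G (take k h) then Some (s j (infoset_of G j (take k h))) else None)"
  unfolding follows_def by blast

lemma valid_strat_acts:
  assumes gf: "game_form N G" and v: "valid_strat G b sb" and dn: "h \<in> decnodes G b"
  shows "sb (infoset_of G b h) \<in> acts G b h"
  using v infoset_of_decnode[OF gf dn] acts_some_infoset_of[OF gf dn] unfolding valid_strat_def by auto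

lemma follows_snoc:
  assumes "follows G s g"
  shows "follows G s (g @ [\<lambda>j. if j \<in> movers G g then Some (s j (infoset_of G j g)) else None])"
  using assms unfolding follows_def by (auto simp: nth_append less_Suc_eq)

lemma follows_terminal_ex:
  assumes gf: "game_form N G" and v: "\<forall>b\<in>N. valid_strat G b (s b)"
  shows "\<exists>z\<in>terminal G. follows G s z"
proof -
  have "\<exists>a. g @ [a] \<in> hists G \<and> follows G s (g @ [a])"
    if "g \<in> hists G \<and> follows G s g" "g \<in> nonterm G" for g
  proof -
    have "s b (infoset_of G b g) \<in> acts G b g" if "b \<in> movers G g" for b
    proof -
      have dn: "g \<in> decnodes G b" using \<open>g \<in> nonterm G\<close> that by (simp add: decnodes_def)
      show ?thesis using valid_strat_acts[OF gf bspec[OF v decnodes_agent[OF gf dn]] dn] .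
    qed
    then have "g @ [\<lambda>j. if j \<in> movers G g then Some (s j (infoset_of G j g)) else None] \<in> hists G"
      by (rule snoc_move_in_hists[OF gf \<open>g \<in> nonterm G\<close>])
    then show ?thesis using follows_snoc that(1) by blast
  qed
  then have "\<exists>z\<in>terminal G. z \<in> hists G \<and> follows G s z"
    using hists_Nil[OF gf] by (intro terminal_ex_if_extendable[OF gf, where r = "[]"]) (auto simp: follows_def)
  then show ?thesis by blast
qed

lemma follows_take_eq:
  assumes "follows G s z" "follows G s z'"
  shows "n \<le> length z \<Longrightarrow> n \<le> length z' \<Longrightarrow> take n z = take n z'"
proof (induction n)
  case 0 then show ?case by simp
next
  case (Suc n)
  have n: "n < length z" "n < length z'" using Suc.prems by auto
  have IH: "take n z = take n z'" using Suc.IH n by simp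
  have "z!n = z'!n" using followsD[OF assms(1) n(1)] followsD[OF assms(2) n(2)] unfolding IH by simp
  then show ?case using IH n by (simp add: take_Suc_conv_app_nth)
qed

lemma follows_terminal_unique:
  assumes "z \<in> terminal G" "z' \<in> terminal G" "follows G s z" "follows G s z'"
  shows "z = z'"
proof -
  have "prefix z z' \<or> prefix z' z"
    by (rule prefix_or_prefix_if_take_eq) (rule follows_take_eq[OF assms(3,4)])
  then have "prefix z z'" by (rule prefix_terminal_if_comparable[OF terminal_in_hists[OF assms(1)] assms(2)])
  then show ?thesis using terminal_prefix_eq[OF assms(1) terminal_in_hists[OF assms(2)]] by simp
qed

lemma zpath_eq:
  assumes "z \<in> terminal G" "follows G s z"
  shows "zpath G s = z"
  unfolding zpath_def
proof (rule the_equality)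
  show "z \<in> terminal G \<and> follows G s z" using assms by simp
  fix z' assume "z' \<in> terminal G \<and> follows G s z'"
  then show "z' = z" using follows_terminal_unique assms by blast
qed

lemma zpath_terminal_follows:
  assumes gf: "game_form N G" and v: "\<forall>b\<in>N. valid_strat G b (s b)"
  shows "zpath G s \<in> terminal G \<and> follows G s (zpath G s)"
proof -
  obtain z where "z \<in> terminal G" "follows G s z" using follows_terminal_ex[OF gf v] by blast
  then show ?thesis using zpath_eq by metis
qed

lemma follows_experience_nth:
  assumes "follows G s h" "l < length (experience G b h)"
  shows "snd (experience G b h ! l) = s b (fst (experience G b h ! l))"
proof -
  obtain k where k: "k<length h" "b \<in> movers G (take k h)"
      "experience G b h ! l = (infoset_of G b (take k h), the ((h!k) b))"
    using experience_nth_ex[OF assms(2)] by blast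
  show ?thesis using followsD[OF assms(1) k(1)] k(2,3) by simp
qed

lemma follows_experience_set:
  assumes "follows G s h" "(K, x) \<in> set (experience G b h)"
  shows "x = s b K"
proof -
  obtain l where l: "l < length (experience G b h)" "experience G b h ! l = (K, x)"
    using assms(2) by (auto simp: in_set_conv_nth)
  show ?thesis using follows_experience_nth[OF assms(1) l(1)] l(2) by simp
qed

lemma follows_experienceI:
  assumes "follows G P z" and "\<And>m K x. (K, x) \<in> set (experience G m z) \<Longrightarrow> P' m K = x"
  shows "follows G P' z"
  unfolding follows_def
proof (intro allI impI ext)
  fix k j assume k: "k < length z"
  show "(z ! k) j = (if j \<in> movers G (take k z) then Some (P' j (infoset_of G j (take k z))) else None)"
    using followsD[OF assms(1) k] assms(2)[OF experience_take_mem[OF k, of j]] by auto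
qed

lemma experience_first_entry:
  assumes gf: "game_form N G" and z: "z \<in> terminal G" and bN: "b \<in> N"
  shows "0 < length (experience G b z) \<and> fst (experience G b z ! 0) = infoset_of G b []"
proof -
  have "z \<noteq> []" using z Nil_in_nonterm[OF gf] unfolding nonterm_def by auto
  then have z0: "0 < length z" by simp
  have mv: "b \<in> movers G (take 0 z)" using movers_Nil[OF gf] bN by simp
  have e0: "length (experience G b (take 0 z)) = 0" by (simp add: experience_def)
  have "length (experience G b (take 0 z)) < length (experience G b z) \<and>
    experience G b z ! length (experience G b (take 0 z)) = (infoset_of G b (take 0 z), the ((z!0) b))"
    by (rule experience_take_nth[OF z0 mv])
  then show ?thesis unfolding e0 by simp
qed

lemma unconditional_type_on_path:
  assumes gm: "gradual_mechanism N X Theta f G" and z: "z \<in> hists G" and fl: "follows G P z"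
    and u: "unconditional Theta G a t (P a)" and t: "t \<in> Theta a"
  shows "t \<in> thetaH Theta a z"
proof -
  have gf: "game_form N G" by (rule gm_game_form[OF gm])
  have "t \<in> thetaH Theta a (take n z)" for n
  proof (induction n)
    case 0 then show ?case using t by (simp add: thetaH_Nil)
  next
    case (Suc n)
    show ?case
    proof (cases "n < length z")
      case True
      note zn = followsD[OF fl True]
      show ?thesis
      proof (cases "a \<in> movers G (take n z)")
        case mv: True
        have dn: "take n z \<in> decnodes G a" by (rule take_in_decnodes[OF gf z True mv])
        have "(z!n) a = Some (P a (infoset_of G a (take n z)))" using zn mv by simp
        then have "thetaH Theta a (take (Suc n) z) = P a (infoset_of G a (take n z))"
          by (rule thetaH_take_Suc[OF True])
        moreover have "t \<in> P a (infoset_of G a (take n z))"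
          using u dn Suc.IH unfolding unconditional_def by blast
        ultimately show ?thesis by simp
      next
        case False
        then have "(z!n) a = None" using zn by simp
        then show ?thesis using thetaH_take_Suc_None[OF True] Suc.IH by simp
      qed
    next
      case False
      then show ?thesis using Suc.IH by simp
    qed
  qed
  from this[of "length z"] show ?thesis by simp
qed

section \<open>Perfect recall and immediate successors\<close>

lemma experience_nth_node:
  assumes gf: "game_form N G" and z: "z \<in> hists G" and l: "l < length (experience G b z)"
  obtains k where "k < length z" "take k z \<in> decnodes G b"
    "experience G b (take k z) = take l (experience G b z)"
    "experience G b z ! l = (infoset_of G b (take k z), the ((z!k) b))"
proof -
  obtain k where k: "k < length z" "b \<in> movers G (take k z)"
      "length (experience G b (take k z)) = l"
      "experience G b z ! l = (infoset_of G b (take k z), the ((z!k) b))"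
    using experience_nth_ex[OF l] by blast
  moreover have "experience G b (take k z) = take l (experience G b z)"
    using prefix_eq_take[OF prefix_experience_take[of G b k z]] k(3) by simp
  ultimately show thesis using that take_in_decnodes[OF gf z k(1,2)] by blast
qed

lemma experience_mem_node:
  assumes gf: "game_form N G" and z: "z \<in> hists G" and K: "(K, x) \<in> set (experience G b z)"
  obtains k where "k < length z" "take k z \<in> decnodes G b"
    "K = infoset_of G b (take k z)" "x = the ((z!k) b)"
proof -
  obtain l where "l < length (experience G b z)" "experience G b z ! l = (K, x)"
    using K by (auto simp: in_set_conv_nth)
  then show thesis using that experience_nth_node[OF gf z] by (metis prod.inject)
qed

lemma info_prec_experience_length:
  assumes gf: "game_form N G" and I: "I \<in> infos G b" and J: "J \<in> infos G b"
    and prec: "info_prec I J" and g: "g \<in> I" and h: "h \<in> J"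
  shows "length (experience G b g) < length (experience G b h)"
proof -
  obtain p q where "p \<in> I" "q \<in> J" "strict_prefix p q" using prec unfolding info_prec_def by blast
  then show ?thesis
    using experience_length_strict_mono[OF infos_in_decnodes[OF gf I]]
      experience_eq_on_infoset[OF gf I g] experience_eq_on_infoset[OF gf J h] by metis
qed

text \<open>An additional own move between \<open>I\<close> and an immediate successor would lie in an intermediate
  information set.\<close>

lemma experience_immediate_succ:
  assumes gf: "game_form N G" and I: "I \<in> infos G b" and J: "J \<in> infos G b"
    and imm: "immediate_succ G b I J" and gI: "gI \<in> I" and gJ: "gJ \<in> J"
  shows "experience G b gJ = experience G b gI @ [(I, thetaI Theta b J)]"
proof -
  obtain g g' where gg: "g \<in> I" "g' \<in> J" "strict_prefix g g'"
    using imm unfolding immediate_succ_def info_prec_def by blast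
  define n where "n = length g"
  define L where "L = length (experience G b g)"
  have gn: "g = take n g'" "n < length g'" using strict_prefixD_take[OF gg(3)] unfolding n_def by auto
  have g': "g' \<in> hists G" using decnodes_in_hists[OF infos_in_decnodes[OF gf J gg(2)]] .
  have "b \<in> movers G (take n g')" using infos_in_decnodes[OF gf I gg(1)] gn(1) by (simp add: decnodes_def)
  then have entry: "L < length (experience G b g')" "experience G b g' ! L = (I, the ((g'!n) b))"
    using experience_take_nth[OF gn(2)] infoset_of_eq[OF gf I gg(1)] gn(1) unfolding L_def by metis+
  have pre: "experience G b g = take L (experience G b g')"
    using prefix_eq_take[OF prefix_experience_take[of G b n g']] gn(1) unfolding L_def by simp
  have len: "length (experience G b g') = Suc L"
  proof (rule ccontr)
    assume "length (experience G b g') \<noteq> Suc L"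
    then obtain k where k: "k < length g'" "take k g' \<in> decnodes G b"
        "experience G b (take k g') = take (Suc L) (experience G b g')"
      using experience_nth_node[OF gf g', of "Suc L"] entry(1) by (metis Suc_lessI)
    define K where "K = infoset_of G b (take k g')"
    have K: "K \<in> infos G b" "take k g' \<in> K" using infoset_of_decnode[OF gf k(2)] unfolding K_def by auto
    have "length (experience G b (take k g')) = Suc L" using k(3) entry(1) \<open>_ \<noteq> Suc L\<close> by simp
    moreover have "length (experience G b (take n g')) = L" using gn(1) unfolding L_def by simp
    ultimately have "n < k"
      using prefix_length_le[OF prefix_experience_take[of G b k "take n g'"]] by (cases "n < k") simp_all
    then have "strict_prefix g (take k g')" using gn strict_prefix_take[of n "take k g'"] by simp
    then have "info_prec I K" using gg(1) K(2) unfolding info_prec_def by blast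
    moreover have "info_prec K J" using gg(2) K(2) strict_prefix_take[OF k(1)] unfolding info_prec_def by blast
    ultimately show False using imm K(1) unfolding immediate_succ_def by blast
  qed
  then have "experience G b g' = experience G b g @ [(I, the ((g'!n) b))]"
    using pre entry by (metis lessI take_Suc_conv_app_nth take_all_iff order_refl)
  moreover have "thetaI Theta b J = the ((g'!n) b)"
    using thetaI_eq_thetaH[OF gf J gg(2)] thetaH_experience[OF gf g', of Theta b] calculation by simp
  ultimately show ?thesis
    using experience_eq_on_infoset[OF gf J gJ gg(2)] experience_eq_on_infoset[OF gf I gI gg(1)] by simp
qed

lemma immediate_succ_if_experience_Suc:
  assumes gf: "game_form N G" and I: "I \<in> infos G b" "g \<in> I" and J: "J \<in> infos G b" "h \<in> J"
    and gh: "strict_prefix g h" and len: "length (experience G b h) = Suc (length (experience G b g))"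
  shows "immediate_succ G b I J"
  unfolding immediate_succ_def
proof (intro conjI notI)
  show "info_prec I J" unfolding info_prec_def using I(2) J(2) gh by blast
next
  assume "\<exists>K\<in>infos G b. info_prec I K \<and> info_prec K J"
  then obtain K where K: "K \<in> infos G b" "info_prec I K" "info_prec K J" by blast
  then obtain q where "q \<in> K" unfolding info_prec_def by blast
  have "length (experience G b g) < length (experience G b q)"
    by (rule info_prec_experience_length[OF gf I(1) K(1,2) I(2) \<open>q \<in> K\<close>])
  moreover have "length (experience G b q) < length (experience G b h)"
    by (rule info_prec_experience_length[OF gf K(1) J(1) K(3) \<open>q \<in> K\<close> J(2)])
  ultimately show False using len by simp
qed

lemma immediate_succ_along_experience:
  assumes gf: "game_form N G" and z: "z \<in> hists G"
    and l: "0 < l" "l < length (experience G b z)"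
  defines "E \<equiv> experience G b z"
  shows "fst (E!(l-1)) \<in> infos G b \<and> fst (E!l) \<in> infos G b \<and>
     immediate_succ G b (fst (E!(l-1))) (fst (E!l)) \<and>
     (\<exists>h\<in>fst (E!l). prefix h z) \<and> thetaI Theta b (fst (E!l)) = snd (E!(l-1))"
proof -
  have "l - 1 < length (experience G b z)" using l by simp
  then obtain k0 where k0: "k0 < length z" "take k0 z \<in> decnodes G b"
      "experience G b (take k0 z) = take (l-1) E" "E ! (l-1) = (infoset_of G b (take k0 z), the ((z!k0) b))"
    using experience_nth_node[OF gf z] unfolding E_def by blast
  obtain k1 where k1: "k1 < length z" "take k1 z \<in> decnodes G b"
      "experience G b (take k1 z) = take l E" "E ! l = (infoset_of G b (take k1 z), the ((z!k1) b))"
    using experience_nth_node[OF gf z l(2)] unfolding E_def by blast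
  define g where "g = take k0 z"
  define h where "h = take k1 z"
  define I where "I = infoset_of G b g"
  define J where "J = infoset_of G b h"
  have II: "I \<in> infos G b" "g \<in> I" using infoset_of_decnode[OF gf k0(2)] unfolding I_def g_def by auto
  have JJ: "J \<in> infos G b" "h \<in> J" using infoset_of_decnode[OF gf k1(2)] unfolding J_def h_def by auto
  have lenI: "length (experience G b g) = l - 1" and lenJ: "length (experience G b h) = l"
    using k0(3) k1(3) l unfolding g_def h_def E_def by simp_all
  have "k0 < k1"
  proof (rule ccontr)
    assume "\<not> k0 < k1"
    then have "h = take k1 g" unfolding g_def h_def by (simp add: min_def)
    then have "length (experience G b h) \<le> length (experience G b g)"
      using prefix_length_le[OF prefix_experience_take] by metis
    then show False using lenI lenJ l(1) by simp
  qed
  then have "strict_prefix g h"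
    unfolding g_def h_def using k1(1) strict_prefix_take[of k0 "take k1 z"] by simp
  then have imm: "immediate_succ G b I J"
    using immediate_succ_if_experience_Suc[OF gf II JJ] lenI lenJ l(1) by simp
  have eh: "experience G b h = take l E" "take l E \<noteq> []" using k1(3) l unfolding h_def E_def by auto
  have "thetaI Theta b J = thetaH Theta b h" by (rule thetaI_eq_thetaH[OF gf JJ])
  also have "\<dots> = snd (last (take l E))"
    using thetaH_experience[OF gf decnodes_in_hists[OF k1(2)], of Theta b] eh unfolding h_def by simp
  also have "\<dots> = snd (E ! (l-1))" using l eh(2) by (simp add: last_conv_nth E_def)
  finally have "thetaI Theta b J = snd (E ! (l-1))" .
  moreover have "fst (E!(l-1)) = I" "fst (E!l) = J" using k0(4) k1(4) unfolding I_def J_def g_def h_def by simp_all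
  moreover have "prefix h z" unfolding h_def by (rule take_is_prefix)
  ultimately show ?thesis using II JJ imm by auto
qed

lemma experience_at_infoset_on_path:
  assumes gf: "game_form N G" and J: "J \<in> infos G b" and h: "h \<in> J"
    and z: "z \<in> terminal G" and hz: "prefix h z"
  shows "take (length (experience G b h)) (experience G b z) = experience G b h"
    and "length (experience G b h) < length (experience G b z)"
    and "fst (experience G b z ! length (experience G b h)) = J"
proof -
  have dh: "h \<in> decnodes G b" by (rule infos_in_decnodes[OF gf J h])
  then have "h \<noteq> z" using z unfolding decnodes_def nonterm_def by auto
  then have "strict_prefix h z" using hz by (simp add: strict_prefix_def)
  then have hz': "h = take (length h) z" "length h < length z" using strict_prefixD_take by auto
  have "b \<in> movers G (take (length h) z)" using dh hz'(1) by (simp add: decnodes_def)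
  note entry = experience_take_nth[OF hz'(2) this, folded hz'(1)]
  show "take (length (experience G b h)) (experience G b z) = experience G b h"
    using prefix_eq_take[OF prefix_experience_take[of G b "length h" z]] hz'(1) by simp
  show "length (experience G b h) < length (experience G b z)" using entry by simp
  show "fst (experience G b z ! length (experience G b h)) = J"
    using entry infoset_of_eq[OF gf J h] by simp
qed

text \<open>The experiences through \<open>I1\<close> and \<open>I2\<close> agree before the split and differ at it; by perfect
  recall a common information set is reached at the same position on both paths, hence before
  the split, where both paths carry the same actions.\<close>

lemma common_infoset_same_action:
  assumes gf: "game_form N G" and I: "I \<in> infos G b" and I1: "I1 \<in> infos G b" and I2: "I2 \<in> infos G b"
    and ne: "I1 \<noteq> I2" and imm1: "immediate_succ G b I I1" and imm2: "immediate_succ G b I I2"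
    and th: "thetaI Theta b I1 = thetaI Theta b I2"
    and h1: "h1 \<in> I1" and h2: "h2 \<in> I2" and p1: "prefix h1 z1" and p2: "prefix h2 z2"
    and z1: "z1 \<in> terminal G" and z2: "z2 \<in> terminal G"
    and k1: "(K, x1) \<in> set (experience G b z1)" and k2: "(K, x2) \<in> set (experience G b z2)"
  shows "x1 = x2"
proof -
  define E1 where "E1 = experience G b z1"
  define E2 where "E2 = experience G b z2"
  obtain gI where gI: "gI \<in> I" using imm1 unfolding immediate_succ_def info_prec_def by blast
  define F where "F = experience G b h1"
  define L where "L = length F"
  have F2: "experience G b h2 = F"
    using experience_immediate_succ[OF gf I I1 imm1 gI h1, of Theta]
      experience_immediate_succ[OF gf I I2 imm2 gI h2, of Theta] th unfolding F_def by simp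
  have E1: "take L E1 = F" "L < length E1" "fst (E1 ! L) = I1"
    using experience_at_infoset_on_path[OF gf I1 h1 z1 p1] unfolding E1_def L_def F_def by auto
  have E2: "take L E2 = F" "L < length E2" "fst (E2 ! L) = I2"
    using experience_at_infoset_on_path[OF gf I2 h2 z2 p2] F2 unfolding E2_def L_def by auto
  obtain l1 where l1: "l1 < length E1" "E1 ! l1 = (K, x1)" using k1 unfolding E1_def by (auto simp: in_set_conv_nth)
  obtain l2 where l2: "l2 < length E2" "E2 ! l2 = (K, x2)" using k2 unfolding E2_def by (auto simp: in_set_conv_nth)
  obtain k where "k < length z1" "take k z1 \<in> decnodes G b" and e1: "experience G b (take k z1) = take l1 E1"
      and "E1 ! l1 = (infoset_of G b (take k z1), the ((z1!k) b))"
    using experience_nth_node[OF gf terminal_in_hists[OF z1] l1(1)[unfolded E1_def]] unfolding E1_def by blast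
  then have p1': "take k z1 \<in> K" "K \<in> infos G b" using infoset_of_decnode[OF gf] l1(2) by auto
  obtain k' where "k' < length z2" "take k' z2 \<in> decnodes G b" and e2: "experience G b (take k' z2) = take l2 E2"
      and "E2 ! l2 = (infoset_of G b (take k' z2), the ((z2!k') b))"
    using experience_nth_node[OF gf terminal_in_hists[OF z2] l2(1)[unfolded E2_def]] unfolding E2_def by blast
  then have p2': "take k' z2 \<in> K" using infoset_of_decnode[OF gf] l2(2) by auto
  have ee: "take l1 E1 = take l2 E2" using experience_eq_on_infoset[OF gf p1'(2,1) p2'] e1 e2 by simp
  then have l12: "l1 = l2" using l1(1) l2(1) by (metis length_take min.absorb4)
  consider "l1 < L" | "l1 = L" | "L < l1" by linarith
  then show ?thesis
  proof cases
    case 1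
    then show ?thesis using E1(1) E2(1) l1(2) l2(2) l12 by (metis nth_take prod.inject)
  next
    case 2
    then show ?thesis using E1(3) E2(3) l1(2) l2(2) l12 ne by simp
  next
    case 3
    then have "E1 ! L = E2 ! L" using ee l12 by (metis nth_take)
    then show ?thesis using E1(3) E2(3) ne by simp
  qed
qed

section \<open>Reaction-proofness implies incentive compatibility\<close>

lemma reaction_proofD:
  assumes "reaction_proof N Theta R f G" "i \<in> N" "j \<in> N" "i \<noteq> j"
    "I \<in> infos G i" "I1 \<in> infos G i" "I2 \<in> infos G i" "I1 \<noteq> I2"
    "immediate_succ G i I I1" "immediate_succ G i I I2" "thetaI Theta i I1 = thetaI Theta i I2"
    "h1 \<in> I1" "h2 \<in> I2" "\<forall>k\<in>N - {i, j}. valid_strat G k (s k)"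
    "consistent N G (N - {i, j}) s h1" "consistent N G (N - {i, j}) s h2"
    "th1 \<in> profilesH N Theta h1" "th2 \<in> profilesH N Theta h2"
    "consistent_type N Theta G (N - {i, j}) s th1" "consistent_type N Theta G (N - {i, j}) s th2"
  shows "R (th1 j) (f th1) (f th2)"
proof -
  note r = assms(1)[unfolded reaction_proof_def]
  note r1 = mp[OF bspec[OF bspec[OF r assms(2)] assms(3)] assms(4)]
  note r2 = bspec[OF bspec[OF bspec[OF r1 assms(5)] assms(6)] assms(7)]
  note r3 = mp[OF mp[OF mp[OF mp[OF r2 assms(8)] assms(9)] assms(10)] assms(11)]
  note r4 = spec[OF bspec[OF bspec[OF r3 assms(12)] assms(13)], of s]
  note r5 = mp[OF mp[OF mp[OF r4 assms(14)] assms(15)] assms(16)]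
  show ?thesis using mp[OF mp[OF bspec[OF bspec[OF r5 assms(17)] assms(18)] assms(19)] assms(20)] .
qed

lemma profilesH_choice:
  assumes "\<And>m. m \<in> N \<Longrightarrow> S m \<subseteq> thetaH Theta m z \<and> S m \<noteq> {}"
  shows "\<exists>th\<in>profilesH N Theta z. \<forall>m\<in>N. th m \<in> S m"
proof -
  have "PiE N S \<noteq> {}" using assms by (simp add: PiE_eq_empty_iff)
  then obtain th where th: "th \<in> PiE N S" by blast
  have "th \<in> profilesH N Theta z"
    using PiE_mono[of N S "\<lambda>m. thetaH Theta m z"] assms th unfolding profilesH_def by blast
  then show ?thesis using th by (auto simp: PiE_mem)
qed

lemma consistent_zpath_prefix:
  assumes "\<forall>j\<in>N. valid_strat G j (P j)" "\<forall>k\<in>M. P k = s k" "prefix h (zpath G P)"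
  shows "consistent N G M s h"
  unfolding consistent_def using assms by (intro exI[of _ P]) auto

lemma consistent_type_zpath:
  assumes gm: "gradual_mechanism N X Theta f G" and v: "\<forall>j\<in>N. valid_strat G j (P j)"
    and "\<forall>k\<in>M. P k = s k" and th: "th \<in> profilesH N Theta (zpath G P)"
  shows "consistent_type N Theta G M s th"
  unfolding consistent_type_def
  using terminal_of_profile_eq[OF gm conjunct1[OF zpath_terminal_follows[OF gm_game_form[OF gm] v]] th]
    consistent_zpath_prefix[OF v assms(3)] by simp

text \<open>As \<open>b\<close> plays the same strategy on both paths, entries with equal information sets are
  equal, and the entries at the root agree.\<close>

lemma experience_divergence:
  assumes gf: "game_form N G" and bN: "b \<in> N" and z1: "z1 \<in> terminal G" and z2: "z2 \<in> terminal G"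
    and f1: "follows G P1 z1" and f2: "follows G P2 z2" and Pb: "P1 b = P2 b"
    and par: "experience G b z1 \<parallel> experience G b z2"
  defines "E1 \<equiv> experience G b z1" and "E2 \<equiv> experience G b z2"
  obtains l where "0 < l" "l < length E1" "l < length E2"
    "E1 ! (l-1) = E2 ! (l-1)" "fst (E1 ! l) \<noteq> fst (E2 ! l)"
proof -
  obtain as c cs d ds where cd: "c \<noteq> d" "E1 = as @ c # cs" "E2 = as @ d # ds"
    using parallel_decomp[OF par] unfolding E1_def E2_def by blast
  define l where "l = length as"
  have l1: "l < length E1" "E1 ! l = c" "take l E1 = as" using cd unfolding l_def by auto
  have l2: "l < length E2" "E2 ! l = d" "take l E2 = as" using cd unfolding l_def by auto
  have strat: "snd (E1 ! k) = P1 b (fst (E1 ! k))" "snd (E2 ! k') = P1 b (fst (E2 ! k'))"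
    if "k < length E1" "k' < length E2" for k k'
    using follows_experience_nth[OF f1 that(1)[unfolded E1_def]]
      follows_experience_nth[OF f2 that(2)[unfolded E2_def]] Pb unfolding E1_def E2_def by simp_all
  have ne: "fst (E1 ! l) \<noteq> fst (E2 ! l)"
    using strat[OF l1(1) l2(1)] l1(2) l2(2) cd(1) by (metis prod.collapse)
  moreover have "0 < l"
    using ne experience_first_entry[OF gf z1 bN] experience_first_entry[OF gf z2 bN]
    unfolding E1_def E2_def by (cases l) auto
  moreover have "E1 ! (l-1) = E2 ! (l-1)" using l1(3) l2(3) \<open>0 < l\<close> by (metis diff_less less_one nth_take)
  ultimately show thesis using that l1(1) l2(1) by blast
qed

lemma profilesH_ex_type:
  assumes gm: "gradual_mechanism N X Theta f G" and z: "z \<in> hists G"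
    and aN: "a \<in> N" and t: "t \<in> thetaH Theta a z"
  shows "\<exists>th\<in>profilesH N Theta z. th a = t"
proof -
  have "\<exists>th\<in>profilesH N Theta z. \<forall>m\<in>N. th m \<in> (if m = a then {t} else thetaH Theta m z)"
    by (rule profilesH_choice) (use thetaH_nonempty[OF gm _ z] t in auto)
  then show ?thesis using aN by fastforce
qed

lemma divergent_experiences_split:
  assumes gf: "game_form N G" and bN: "b \<in> N" and z1: "z1 \<in> terminal G" and z2: "z2 \<in> terminal G"
    and f1: "follows G P1 z1" and f2: "follows G P2 z2" and Pb: "P1 b = P2 b"
    and par: "experience G b z1 \<parallel> experience G b z2"
  obtains I K1 K2 h1 h2 where "I \<in> infos G b" "K1 \<in> infos G b" "K2 \<in> infos G b" "K1 \<noteq> K2"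
    "immediate_succ G b I K1" "immediate_succ G b I K2" "thetaI Theta b K1 = thetaI Theta b K2"
    "h1 \<in> K1" "prefix h1 z1" "h2 \<in> K2" "prefix h2 z2"
proof -
  define E1 where "E1 = experience G b z1"
  define E2 where "E2 = experience G b z2"
  obtain l where l: "0 < l" "l < length E1" "l < length E2"
      "E1 ! (l-1) = E2 ! (l-1)" "fst (E1 ! l) \<noteq> fst (E2 ! l)"
    unfolding E1_def E2_def by (rule experience_divergence[OF gf bN z1 z2 f1 f2 Pb par])
  note i1 = immediate_succ_along_experience[OF gf terminal_in_hists[OF z1] l(1,2)[unfolded E1_def],
      of Theta, folded E1_def]
  note i2 = immediate_succ_along_experience[OF gf terminal_in_hists[OF z2] l(1,3)[unfolded E2_def],
      of Theta, folded E2_def]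
  obtain h1 where "h1 \<in> fst (E1 ! l)" "prefix h1 z1" using i1 by blast
  moreover obtain h2 where "h2 \<in> fst (E2 ! l)" "prefix h2 z2" using i2 by blast
  moreover have "thetaI Theta b (fst (E1 ! l)) = thetaI Theta b (fst (E2 ! l))" using i1 i2 l(4) by simp
  ultimately show thesis using that[of "fst (E1 ! (l-1))" "fst (E1 ! l)" "fst (E2 ! l)" h1 h2] i1 i2 l(4,5)
    by simp
qed

lemma preferred_if_observer_diverges:
  assumes rp: "reaction_proof N Theta R f G" and gm: "gradual_mechanism N X Theta f G"
    and aN: "a \<in> N" and bN: "b \<in> N" and ba: "b \<noteq> a"
    and vs: "\<forall>j\<in>N. valid_strat G j (s j)" and vst: "valid_strat G a st" and vsi: "valid_strat G a si"
    and t: "t \<in> thetaH Theta a (zpath G (s(a := st)))"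
    and par: "experience G b (zpath G (s(a := st))) \<parallel> experience G b (zpath G (s(a := si)))"
  shows "R t (outc G (zpath G (s(a := st)))) (outc G (zpath G (s(a := si))))"
proof -
  have gf: "game_form N G" by (rule gm_game_form[OF gm])
  define z1 where "z1 = zpath G (s(a := st))"
  define z2 where "z2 = zpath G (s(a := si))"
  have v1: "\<forall>j\<in>N. valid_strat G j ((s(a := st)) j)" and v2: "\<forall>j\<in>N. valid_strat G j ((s(a := si)) j)"
    using vs vst vsi by auto
  have z1: "z1 \<in> terminal G" "follows G (s(a := st)) z1"
    using zpath_terminal_follows[of N G "s(a := st)", OF gf v1] unfolding z1_def by simp_all
  have z2: "z2 \<in> terminal G" "follows G (s(a := si)) z2"
    using zpath_terminal_follows[of N G "s(a := si)", OF gf v2] unfolding z2_def by simp_all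
  note z1h = terminal_in_hists[OF z1(1)] and z2h = terminal_in_hists[OF z2(1)]
  have "(s(a := st)) b = (s(a := si)) b" using ba by simp
  then obtain I K1 K2 h1 h2 where split: "I \<in> infos G b" "K1 \<in> infos G b" "K2 \<in> infos G b" "K1 \<noteq> K2"
      "immediate_succ G b I K1" "immediate_succ G b I K2" "thetaI Theta b K1 = thetaI Theta b K2"
    and h1: "h1 \<in> K1" "prefix h1 z1" and h2: "h2 \<in> K2" "prefix h2 z2"
    by (rule divergent_experiences_split[OF gf bN z1(1) z2(1) z1(2) z2(2) _ par[folded z1_def z2_def]])
  obtain th1 where th1: "th1 \<in> profilesH N Theta z1" "th1 a = t"
    using profilesH_ex_type[OF gm z1h aN] t unfolding z1_def by blast
  obtain th2 where th2: "th2 \<in> profilesH N Theta z2"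
    using profilesH_ex_type[OF gm z2h aN] thetaH_nonempty[OF gm aN z2h] by blast
  have M: "\<forall>k\<in>N - {b, a}. (s(a := st)) k = s k" "\<forall>k\<in>N - {b, a}. (s(a := si)) k = s k" by auto
  have "R (th1 a) (f th1) (f th2)"
  proof (rule reaction_proofD[OF rp bN aN ba split h1(1) h2(1)])
    show "\<forall>k\<in>N - {b, a}. valid_strat G k (s k)" using vs by blast
    show "consistent N G (N - {b, a}) s h1"
      using consistent_zpath_prefix[where P="s(a := st)", OF v1 M(1)] h1(2) z1_def by simp
    show "consistent N G (N - {b, a}) s h2"
      using consistent_zpath_prefix[where P="s(a := si)", OF v2 M(2)] h2(2) z2_def by simp
    show "th1 \<in> profilesH N Theta h1" by (rule profilesH_prefix_mono[OF gm z1h h1(2) th1(1)])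
    show "th2 \<in> profilesH N Theta h2" by (rule profilesH_prefix_mono[OF gm z2h h2(2) th2])
    show "consistent_type N Theta G (N - {b, a}) s th1"
      using consistent_type_zpath[where P="s(a := st)", OF gm v1 M(1)] th1(1) z1_def by simp
    show "consistent_type N Theta G (N - {b, a}) s th2"
      using consistent_type_zpath[where P="s(a := si)", OF gm v2 M(2)] th2 z2_def by simp
  qed
  then show ?thesis
    using th1 outc_eq_scf[OF gm z1(1) th1(1)] outc_eq_scf[OF gm z2(1) th2] unfolding z1_def z2_def by simp
qed

lemma preferred_if_observers_comparable:
  assumes sp: "strategy_proof N Theta R f" and gm: "gradual_mechanism N X Theta f G"
    and aN: "a \<in> N" and z1: "z1 \<in> terminal G" and z2: "z2 \<in> terminal G"
    and t: "t \<in> thetaH Theta a z1"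
    and comp: "\<And>b. b \<in> N \<Longrightarrow> b \<noteq> a \<Longrightarrow>
      prefix (experience G b z1) (experience G b z2) \<or> prefix (experience G b z2) (experience G b z1)"
  shows "R t (outc G z1) (outc G z2)"
proof -
  have z1h: "z1 \<in> hists G" and z2h: "z2 \<in> hists G" using z1 z2 by (simp_all add: terminal_in_hists)
  have common: "thetaH Theta b z1 \<inter> thetaH Theta b z2 \<noteq> {}" if "b \<in> N" "b \<noteq> a" for b
    using comp[OF that] thetaH_antimono_experience[OF gm that(1) z1h z2h]
      thetaH_antimono_experience[OF gm that(1) z2h z1h]
      thetaH_nonempty[OF gm that(1) z1h] thetaH_nonempty[OF gm that(1) z2h] by blast
  define S where "S m = (if m = a then {t} else thetaH Theta m z1 \<inter> thetaH Theta m z2)" for m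
  have "S m \<subseteq> thetaH Theta m z1 \<and> S m \<noteq> {}" if "m \<in> N" for m
    using common[OF that] t unfolding S_def by auto
  then have "\<exists>th1\<in>profilesH N Theta z1. \<forall>m\<in>N. th1 m \<in> S m" by (rule profilesH_choice)
  then obtain th1 where th1: "th1 \<in> profilesH N Theta z1" and th1m: "\<forall>m\<in>N. th1 m \<in> S m" by blast
  obtain x2 where x2: "x2 \<in> thetaH Theta a z2" using thetaH_nonempty[OF gm aN z2h] by blast
  have "th1 m \<in> thetaH Theta m z2" if "m \<in> N" "m \<noteq> a" for m
    using bspec[OF th1m that(1)] that(2) unfolding S_def by simp
  then have th2: "th1(a := x2) \<in> profilesH N Theta z2"
    using th1 x2 aN unfolding profilesH_def PiE_iff extensional_def by auto
  have "th1 \<in> PiE N Theta"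
    using th1 thetaH_subset_Theta[OF gm z1h] unfolding profilesH_def PiE_iff by blast
  then have "R (th1 a) (f th1) (f (th1(a := x2)))"
    using sp aN x2 thetaH_subset_Theta[OF gm z2h] unfolding strategy_proof_def by blast
  then show ?thesis using bspec[OF th1m aN] unfolding S_def using outc_eq_scf[OF gm z1 th1] outc_eq_scf[OF gm z2 th2] by simp
qed

lemma reaction_proof_incentive_compatible:
  assumes sp: "strategy_proof N Theta R f" and gm: "gradual_mechanism N X Theta f G"
    and rp: "reaction_proof N Theta R f G"
  shows "incentive_compatible N Theta R G"
  unfolding incentive_compatible_def
proof (intro ballI allI impI)
  fix a t st si s
  assume aN: "a \<in> N" and t: "t \<in> Theta a" and vst: "valid_strat G a st"
    and ust: "unconditional Theta G a t st" and vsi: "valid_strat G a si"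
    and vs: "\<forall>j\<in>N. valid_strat G j (s j)"
  have gf: "game_form N G" by (rule gm_game_form[OF gm])
  have v1: "\<forall>j\<in>N. valid_strat G j ((s(a := st)) j)" and v2: "\<forall>j\<in>N. valid_strat G j ((s(a := si)) j)"
    using vs vst vsi by auto
  note z1 = zpath_terminal_follows[of N G "s(a := st)", OF gf v1]
    and z2 = zpath_terminal_follows[of N G "s(a := si)", OF gf v2]
  have tz: "t \<in> thetaH Theta a (zpath G (s(a := st)))"
    using unconditional_type_on_path[OF gm terminal_in_hists[OF conjunct1[OF z1]] conjunct2[OF z1] _ t] ust
    by simp
  show "R t (outc G (zpath G (s(a := st)))) (outc G (zpath G (s(a := si))))"
  proof (cases "\<exists>b\<in>N - {a}. experience G b (zpath G (s(a := st))) \<parallel> experience G b (zpath G (s(a := si)))")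
    case True
    then show ?thesis using preferred_if_observer_diverges[OF rp gm aN _ _ vs vst vsi tz] by blast
  next
    case False
    then show ?thesis
      using preferred_if_observers_comparable[OF sp gm aN conjunct1[OF z1] conjunct1[OF z2] tz]
      by (auto simp: parallel_def)
  qed
qed


section \<open>Incentive compatibility implies reaction-proofness\<close>

lemma incentive_compatibleD:
  assumes "incentive_compatible N Theta R G" "i \<in> N" "t \<in> Theta i"
    "valid_strat G i st" "unconditional Theta G i t st" "valid_strat G i si"
    "\<forall>j\<in>N. valid_strat G j (s j)"
  shows "R t (outc G (zpath G (s(i := st)))) (outc G (zpath G (s(i := si))))"
proof -
  note r = assms(1)[unfolded incentive_compatible_def]
  note r1 = spec[OF spec[OF spec[OF bspec[OF bspec[OF r assms(2)] assms(3)], of st], of si], of s]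
  show ?thesis by (rule mp[OF mp[OF mp[OF mp[OF r1 assms(4)] assms(5)] assms(6)] assms(7)])
qed
lemma consistent_type_terminal:
  assumes gm: "gradual_mechanism N X Theta f G" and h: "h \<in> hists G" and th: "th \<in> profilesH N Theta h"
    and ct: "consistent_type N Theta G M s th"
  shows "\<exists>z s'. z \<in> terminal G \<and> prefix h z \<and> th \<in> profilesH N Theta z \<and>
     (\<forall>i\<in>N. valid_strat G i (s' i)) \<and> (\<forall>i\<in>M. \<forall>I\<in>infos G i. s' i I = s i I) \<and>
     follows G s' z"
proof -
  have gf: "game_form N G" by (rule gm_game_form[OF gm])
  obtain z where z: "z \<in> terminal G" "prefix h z" "th \<in> profilesH N Theta z"
    using terminal_extension_with_profile[OF gm h th] by blast
  have "consistent N G M s z" using ct unfolding consistent_type_def terminal_of_profile_eq[OF gm z(1) z(3)] .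
  then obtain s' where s': "\<forall>i\<in>N. valid_strat G i (s' i)" "\<forall>i\<in>M. \<forall>I\<in>infos G i. s' i I = s i I"
    "prefix z (zpath G s')" unfolding consistent_def by blast
  have zp: "zpath G s' \<in> terminal G" "follows G s' (zpath G s')" using zpath_terminal_follows[OF gf s'(1)] by auto
  have "zpath G s' = z" by (rule terminal_prefix_eq[OF z(1) terminal_in_hists[OF zp(1)] s'(3)])
  then show ?thesis using z s' zp by metis
qed

lemma experience_infoset_mem:
  assumes "game_form N G" "z \<in> hists G" "(K, x) \<in> set (experience G m z)"
  shows "K \<in> infos G m"
  using experience_mem_node[OF assms] infoset_of_decnode[OF assms(1)] by blast

lemma unconditional_strategy_ex:
  assumes gm: "gradual_mechanism N X Theta f G" and s0: "valid_strat G a s0"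
  shows "\<exists>st. valid_strat G a st \<and> unconditional Theta G a t st"
proof -
  have gf: "game_form N G" by (rule gm_game_form[OF gm])
  define st where "st K = (if \<exists>x\<in>acts G a (SOME h. h \<in> K). t \<in> x
      then SOME x. x \<in> acts G a (SOME h. h \<in> K) \<and> t \<in> x else s0 K)" for K
  have st_some: "st K \<in> acts G a (SOME h. h \<in> K) \<and> t \<in> st K"
    if "\<exists>x\<in>acts G a (SOME h. h \<in> K). t \<in> x" for K
    using someI_ex[of "\<lambda>x. x \<in> acts G a (SOME h. h \<in> K) \<and> t \<in> x"] that unfolding st_def by auto
  have "valid_strat G a st"
    using s0 st_some unfolding valid_strat_def st_def by auto
  moreover have "unconditional Theta G a t st"
    unfolding unconditional_def
  proof (intro ballI impI)
    fix h assume dn: "h \<in> decnodes G a" and th: "t \<in> thetaH Theta a h"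
    then have "\<exists>x\<in>acts G a (SOME h'. h' \<in> infoset_of G a h). t \<in> x"
      using gm_acts_decnode[OF gm dn] acts_some_infoset_of[OF gf dn] by auto
    then show "t \<in> st (infoset_of G a h)" using st_some by blast
  qed
  ultimately show ?thesis by blast
qed

text \<open>The action taken contains \<open>t\<close>, and the actions at a node are disjoint.\<close>

lemma unconditional_strategy_on_experience:
  assumes gm: "gradual_mechanism N X Theta f G" and z: "z \<in> hists G" and t: "t \<in> thetaH Theta a z"
    and vst: "valid_strat G a st" and ust: "unconditional Theta G a t st"
    and K: "(K, x) \<in> set (experience G a z)"
  shows "st K = x"
proof -
  have gf: "game_form N G" by (rule gm_game_form[OF gm])
  obtain k where k: "k < length z" "take k z \<in> decnodes G a"
      "K = infoset_of G a (take k z)" "x = the ((z!k) a)"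
    using experience_mem_node[OF gf z K] by blast
  obtain y where y: "(z!k) a = Some y" "y \<in> acts G a (take k z)"
    using hist_nth_action[OF gf z k(1), of a] k(2) unfolding decnodes_def by blast
  have ty: "t \<in> y" using t thetaH_subset_action[OF gm z k(1) y(1)] by auto
  have "t \<in> thetaH Theta a (take k z)" using t thetaH_prefix_antimono[OF gm z take_is_prefix] by blast
  then have "t \<in> st K" using ust k(2,3) unfolding unconditional_def by blast
  moreover have "st K \<in> acts G a (take k z)" using valid_strat_acts[OF gf vst k(2)] k(3) by simp
  ultimately show ?thesis using action_eq_if_common_type[OF gm k(2) _ y(2) _ ty] k(4) y(1) by simp
qed

lemma merged_strategy_ex:
  assumes "valid_strat G b s1" "valid_strat G b s2"
    and s1: "\<forall>(K, x)\<in>set E1. s1 K = x" and s2: "\<forall>(K, x)\<in>set E2. s2 K = x"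
    and agree: "\<And>K x1 x2. (K, x1) \<in> set E1 \<Longrightarrow> (K, x2) \<in> set E2 \<Longrightarrow> x1 = x2"
  shows "\<exists>sb. valid_strat G b sb \<and> (\<forall>(K, x)\<in>set E1. sb K = x) \<and> (\<forall>(K, x)\<in>set E2. sb K = x)"
proof -
  define sb where "sb K = (if K \<in> fst ` set E1 then s1 K else s2 K)" for K
  have "valid_strat G b sb" using assms(1,2) unfolding valid_strat_def sb_def by simp
  moreover have "sb K = x" if "(K, x) \<in> set E1" for K x
    using that s1 unfolding sb_def by (auto intro: rev_image_eqI)
  moreover have "sb K = x" if K: "(K, x) \<in> set E2" for K x
  proof (cases "K \<in> fst ` set E1")
    case True
    then obtain x1 where "(K, x1) \<in> set E1" by auto
    then show ?thesis using True s1 agree[OF _ K] unfolding sb_def by auto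
  next
    case False
    then show ?thesis using K s2 unfolding sb_def by auto
  qed
  ultimately show ?thesis by blast
qed

lemma preferred_by_incentive_compatibility:
  assumes gm: "gradual_mechanism N X Theta f G" and ic: "incentive_compatible N Theta R G"
    and aN: "a \<in> N" and bN: "b \<in> N" and ba: "b \<noteq> a"
    and z1: "z1 \<in> terminal G" "follows G s1 z1" and z2: "z2 \<in> terminal G" "follows G s2 z2"
    and v1: "\<forall>i\<in>N. valid_strat G i (s1 i)" and v2: "\<forall>i\<in>N. valid_strat G i (s2 i)"
    and others: "\<forall>m\<in>N - {b, a}. \<forall>K\<in>infos G m. s1 m K = s2 m K"
    and agree: "\<And>K x1 x2. (K, x1) \<in> set (experience G b z1) \<Longrightarrow> (K, x2) \<in> set (experience G b z2) \<Longrightarrow> x1 = x2"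
    and t: "t \<in> thetaH Theta a z1"
  shows "R t (outc G z1) (outc G z2)"
proof -
  have gf: "game_form N G" by (rule gm_game_form[OF gm])
  have z1h: "z1 \<in> hists G" and z2h: "z2 \<in> hists G" using z1(1) z2(1) by (simp_all add: terminal_in_hists)
  have tT: "t \<in> Theta a" using t thetaH_subset_Theta[OF gm z1h] by blast
  obtain st where vst: "valid_strat G a st" and ust: "unconditional Theta G a t st"
    using unconditional_strategy_ex[OF gm bspec[OF v1 aN]] by blast
  have "\<exists>sb. valid_strat G b sb \<and> (\<forall>(K, x)\<in>set (experience G b z1). sb K = x) \<and>
      (\<forall>(K, x)\<in>set (experience G b z2). sb K = x)"
  proof (rule merged_strategy_ex)
    show "valid_strat G b (s1 b)" "valid_strat G b (s2 b)" using v1 v2 bN by blast+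
    show "\<forall>(K, x)\<in>set (experience G b z1). s1 b K = x" using follows_experience_set[OF z1(2)] by fastforce
    show "\<forall>(K, x)\<in>set (experience G b z2). s2 b K = x" using follows_experience_set[OF z2(2)] by fastforce
  qed (rule agree)
  then obtain sb where vsb: "valid_strat G b sb"
    and sb1: "\<forall>(K, x)\<in>set (experience G b z1). sb K = x"
    and sb2: "\<forall>(K, x)\<in>set (experience G b z2). sb K = x" by blast
  define S where "S = s1(b := sb)"
  have vS: "\<forall>j\<in>N. valid_strat G j (S j)" using v1 vsb unfolding S_def by simp
  have "follows G (S(a := st)) z1"
  proof (rule follows_experienceI[OF z1(2)])
    fix m K x assume K: "(K, x) \<in> set (experience G m z1)"
    show "(S(a := st)) m K = x"
      using unconditional_strategy_on_experience[OF gm z1h t vst ust] sb1 follows_experience_set[OF z1(2)] K ba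
      unfolding S_def by (cases "m = a"; cases "m = b") auto
  qed
  then have zz1: "zpath G (S(a := st)) = z1" by (rule zpath_eq[OF z1(1)])
  have "follows G (S(a := s2 a)) z2"
  proof (rule follows_experienceI[OF z2(2)])
    fix m K x assume K: "(K, x) \<in> set (experience G m z2)"
    have "m \<in> N" "K \<in> infos G m" using experience_infoset_mem[OF gf z2h K] infos_agent[OF gf] by blast+
    then show "(S(a := s2 a)) m K = x"
      using follows_experience_set[OF z2(2) K] sb2 others K unfolding S_def by (cases "m = a"; cases "m = b") auto
  qed
  then have zz2: "zpath G (S(a := s2 a)) = z2" by (rule zpath_eq[OF z2(1)])
  show ?thesis
    using incentive_compatibleD[OF ic aN tT vst ust bspec[OF v2 aN] vS] unfolding zz1 zz2 .
qed

lemma incentive_compatible_reaction_proof: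
  assumes gm: "gradual_mechanism N X Theta f G" and ic: "incentive_compatible N Theta R G"
  shows "reaction_proof N Theta R f G"
  unfolding reaction_proof_def
proof (intro ballI allI impI)
  fix b a I I1 I2 h1 h2 s th1 th2
  assume bN: "b \<in> N" and aN: "a \<in> N" and ba: "b \<noteq> a" and I: "I \<in> infos G b"
    and I1: "I1 \<in> infos G b" and I2: "I2 \<in> infos G b" and ne: "I1 \<noteq> I2"
    and imm1: "immediate_succ G b I I1" and imm2: "immediate_succ G b I I2"
    and thI: "thetaI Theta b I1 = thetaI Theta b I2" and h1: "h1 \<in> I1" and h2: "h2 \<in> I2"
    and "\<forall>k\<in>N - {b, a}. valid_strat G k (s k)"
    and "consistent N G (N - {b, a}) s h1" "consistent N G (N - {b, a}) s h2"
    and th1: "th1 \<in> profilesH N Theta h1" and th2: "th2 \<in> profilesH N Theta h2"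
    and ct1: "consistent_type N Theta G (N - {b, a}) s th1"
    and ct2: "consistent_type N Theta G (N - {b, a}) s th2"
  have gf: "game_form N G" by (rule gm_game_form[OF gm])
  have h1h: "h1 \<in> hists G" by (rule decnodes_in_hists[OF infos_in_decnodes[OF gf I1 h1]])
  have h2h: "h2 \<in> hists G" by (rule decnodes_in_hists[OF infos_in_decnodes[OF gf I2 h2]])
  obtain z1 s1 where z1: "z1 \<in> terminal G" "prefix h1 z1" "th1 \<in> profilesH N Theta z1"
    and s1: "\<forall>i\<in>N. valid_strat G i (s1 i)" "\<forall>i\<in>N - {b, a}. \<forall>I\<in>infos G i. s1 i I = s i I"
    and f1: "follows G s1 z1"
    using consistent_type_terminal[OF gm h1h th1 ct1] by blast
  obtain z2 s2 where z2: "z2 \<in> terminal G" "prefix h2 z2" "th2 \<in> profilesH N Theta z2"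
    and s2: "\<forall>i\<in>N. valid_strat G i (s2 i)" "\<forall>i\<in>N - {b, a}. \<forall>I\<in>infos G i. s2 i I = s i I"
    and f2: "follows G s2 z2"
    using consistent_type_terminal[OF gm h2h th2 ct2] by blast
  have "R (th1 a) (outc G z1) (outc G z2)"
  proof (rule preferred_by_incentive_compatibility[OF gm ic aN bN ba z1(1) f1 z2(1) f2 s1(1) s2(1)])
    show "\<forall>m\<in>N - {b, a}. \<forall>K\<in>infos G m. s1 m K = s2 m K" using s1(2) s2(2) by simp
    show "th1 a \<in> thetaH Theta a z1" by (rule profilesH_memD[OF z1(3) aN])
  qed (rule common_infoset_same_action[OF gf I I1 I2 ne imm1 imm2 thI h1 h2 z1(2) z2(2) z1(1) z2(1)])
  then show "R (th1 a) (f th1) (f th2)"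
    using outc_eq_scf[OF gm z1(1) z1(3)] outc_eq_scf[OF gm z2(1) z2(3)] by simp
qed

theorem theorem2:
  fixes N :: "'i set" and X :: "'x set" and Theta :: "'i \<Rightarrow> 't set"
    and R :: "'t \<Rightarrow> 'x \<Rightarrow> 'x \<Rightarrow> bool" and f :: "('i \<Rightarrow> 't) \<Rightarrow> 'x"
    and G :: "('i,'t,'x) gform"
  assumes "setting N X Theta R"
    and "scf N X Theta f"
    and "strategy_proof N Theta R f"
    and "gradual_mechanism N X Theta f G"
  shows "incentive_compatible N Theta R G \<longleftrightarrow> reaction_proof N Theta R f G"
  using incentive_compatible_reaction_proof[OF assms(4)] reaction_proof_incentive_compatible[OF assms(3,4)]
  by blast

end
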